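(* Let $f\in\mathbb{Z}_2[x]$, $n\ge2$, and let $\sigma$ be a strongly splitting cycle of $f_n$. Let $A_n=v_2(a_n(x)-1)$ and $B_n=v_2(b_n(x))$ for a representative $x\in\mathbb{Z}_2$ of a point of $\sigma$. 1) If $\min\{A_n,n\}>B_n$, then all lifts of $\sigma$ strongly split $B_n-1$ times (i.e. all cycles lying above $\sigma$ at levels $n+1,\dots,n+B_n-1$ strongly split), and then all the cycles lying above $\sigma$ at level $n+B_n$ strongly grow. 2) If $A_n\le B_n$ and $A_n<n$, then one of the two lifts of $\sigma$ behaves like $\sigma$, i.e. it strongly splits and satisfies $A_{n+1}\le B_{n+1}$ and $A_{n+1}<n+1$; the other lift splits $A_n-1$ times, and then all the cycles lying above it at level $n+A_n$ strongly grow forever. 3) If $B_n\ge n$ and $A_n\ge n$, then all lifts of $\sigma$ strongly split at least $n-1$ times.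
   Context: $v_2$ is the $2$-adic valuation. $f_n$ is the induced map on $\mathbb{Z}/2^n\mathbb{Z}$, $f_n(x\bmod 2^n)=f(x)\bmod 2^n$. A $k$-cycle of $f_n$ is a tuple $\sigma=(x_1,\dots,x_k)$ of distinct elements with $f_n(x_i)=x_{i+1}$, $f_n(x_k)=x_1$; its lifts are the cycles of $f_{n+1}$ in $\{y\in\mathbb{Z}/2^{n+1}\mathbb{Z}:y\bmod 2^n\in\sigma\}$; a cycle lies above $\sigma$ if its reduction mod $2^n$ lies in $\sigma$. For a $k$-cycle at level $n$ and $x\in\mathbb{Z}_2$, $a_n(x)=(f^k)'(x)$, $b_n(x)=(f^k(x)-x)/2^n$ (and analogously at every level with the length of the cycle at that level). A cycle grows if it has a single lift, of twice its length; it splits if it has two lifts of the same length as itself. A cycle strongly grows if $a\equiv1\pmod4$, $b\equiv1\pmod2$; strongly splits if $a\equiv1\pmod4$, $b\equiv0\pmod2$ ($a,b$ the corresponding $a_n,b_n$ at a representative). A cycle "splits $j$ times" if it and all cycles lying above it at the next $j-1$ levels split; "grows forever" means it and all cycles lying above it at all higher levels grow. The quantities $\min\{A_n,n\}$ and the conditions in 1)–3) do not depend on the choice of representative $x$. *)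

theory Defs
  imports "HOL-Computational_Algebra.Polynomial" "HOL-Library.Extended_Nat"
begin

text \<open>Z_2 = inverse limit of Z/2^n: compatible sequences of residues s n in {0..<2^n}.\<close>
definition z2_seq :: "(nat \<Rightarrow> int) \<Rightarrow> bool" where
  "z2_seq s \<longleftrightarrow> (\<forall>n. 0 \<le> s n \<and> s n < 2 ^ n \<and> s (Suc n) mod 2 ^ n = s n)"

typedef z2 = "{s. z2_seq s}"
  by (rule exI[of _ "\<lambda>_. 0"]) (simp add: z2_seq_def)

setup_lifting type_definition_z2

lemma z2_seq_mod: "z2_seq s \<Longrightarrow> s n mod 2 ^ n = s n"
  unfolding z2_seq_def by (simp add: mod_pos_pos_trivial)

lemma z2_closed2:
  fixes g :: "int \<Rightarrow> int \<Rightarrow> int"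
  assumes a: "z2_seq a" and b: "z2_seq b"
    and g: "\<And>x y m. g (x mod m) (y mod m) mod m = g x y mod m"
  shows "z2_seq (\<lambda>n. g (a n) (b n) mod 2 ^ n)"
  unfolding z2_seq_def
proof (intro allI conjI)
  fix n :: nat
  show "0 \<le> g (a n) (b n) mod 2 ^ n" by simp
  show "g (a n) (b n) mod 2 ^ n < 2 ^ n" by simp
  have "g (a (Suc n)) (b (Suc n)) mod 2 ^ Suc n mod 2 ^ n = g (a (Suc n)) (b (Suc n)) mod 2 ^ n"
    by (simp add: mod_mod_cancel)
  also have "\<dots> = g (a (Suc n) mod 2 ^ n) (b (Suc n) mod 2 ^ n) mod 2 ^ n" by (rule g[symmetric])
  also have "\<dots> = g (a n) (b n) mod 2 ^ n" using a b unfolding z2_seq_def by simp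
  finally show "g (a (Suc n)) (b (Suc n)) mod 2 ^ Suc n mod 2 ^ n = g (a n) (b n) mod 2 ^ n" .
qed

lemma z2_seq_0: "z2_seq (\<lambda>n. 0)" by (simp add: z2_seq_def)

instantiation z2 :: comm_ring_1
begin

lift_definition zero_z2 :: z2 is "\<lambda>n. 0" by (rule z2_seq_0)
lift_definition one_z2 :: z2 is "\<lambda>n. 1 mod 2 ^ n"
  using z2_closed2[OF z2_seq_0 z2_seq_0, where g="\<lambda>x y. 1"] by simp
lift_definition plus_z2 :: "z2 \<Rightarrow> z2 \<Rightarrow> z2" is "\<lambda>a b n. (a n + b n) mod 2 ^ n"
  by (rule z2_closed2) (simp_all add: mod_add_eq)
lift_definition uminus_z2 :: "z2 \<Rightarrow> z2" is "\<lambda>a n. (- a n) mod 2 ^ n"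
  by (rule z2_closed2[where g="\<lambda>x y. - x", OF _ z2_seq_0]) (simp_all add: mod_minus_eq)
lift_definition minus_z2 :: "z2 \<Rightarrow> z2 \<Rightarrow> z2" is "\<lambda>a b n. (a n - b n) mod 2 ^ n"
  by (rule z2_closed2) (simp_all add: mod_diff_eq)
lift_definition times_z2 :: "z2 \<Rightarrow> z2 \<Rightarrow> z2" is "\<lambda>a b n. (a n * b n) mod 2 ^ n"
  by (rule z2_closed2) (simp_all add: mod_mult_eq)

instance
proof
  fix a b c :: z2
  show "a + b + c = a + (b + c)"
    by transfer (simp add: mod_add_left_eq mod_add_right_eq add.assoc)
  show "a + b = b + a" by transfer (simp add: add.commute)
  show "0 + a = a" by transfer (simp add: z2_seq_mod)
  show "- a + a = 0" by transfer (simp add: mod_add_left_eq)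
  show "a - b = a + - b" by transfer (simp add: mod_add_right_eq)
  show "a * b * c = a * (b * c)"
    by transfer (simp add: mod_mult_left_eq mod_mult_right_eq mult.assoc)
  show "a * b = b * a" by transfer (simp add: mult.commute)
  show "1 * a = a"
  proof transfer
    fix a :: "nat \<Rightarrow> int"
    assume "z2_seq a"
    then show "(\<lambda>n. 1 mod 2 ^ n * a n mod 2 ^ n) = a"
      unfolding fun_eq_iff by (simp only: mod_mult_left_eq) (simp add: z2_seq_mod)
  qed
  show "(a + b) * c = a * c + b * c"
    by transfer (simp add: mod_mult_left_eq mod_add_eq distrib_right)
  show "(0::z2) \<noteq> 1"
  proof transfer
    have "(1::int) mod 2 ^ 1 \<noteq> 0" by simp
    then show "(\<lambda>n. 0::int) \<noteq> (\<lambda>n. 1 mod 2 ^ n)" by metis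
  qed
qed

end
lift_definition red :: "nat \<Rightarrow> z2 \<Rightarrow> int" is "\<lambda>n s. s n" .

definition v2 :: "z2 \<Rightarrow> enat" where
  "v2 y = (if y = 0 then \<infinity> else enat (GREATEST m. (2::z2) ^ m dvd y))"

text \<open>Elements of Z/2^n Z are represented by their residues in {0..<2^n}.\<close>
definition fn :: "z2 poly \<Rightarrow> nat \<Rightarrow> int \<Rightarrow> int" where
  "fn f n r = red n (poly f (of_int r))"

primrec piter :: "z2 poly \<Rightarrow> nat \<Rightarrow> z2 poly" where
  "piter f 0 = [:0, 1:]"
| "piter f (Suc k) = pcompose f (piter f k)"

text \<open>A cycle of f_n, as the set of its points (a periodic orbit); its length is its cardinality.\<close>
definition is_cycle :: "z2 poly \<Rightarrow> nat \<Rightarrow> int set \<Rightarrow> bool" where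
  "is_cycle f n C \<longleftrightarrow> (\<exists>x k. 0 < k \<and> x \<in> {0..<2^n} \<and> (fn f n ^^ k) x = x \<and>
       C = {(fn f n ^^ i) x | i. i < k})"

definition above :: "z2 poly \<Rightarrow> nat \<Rightarrow> int set \<Rightarrow> nat \<Rightarrow> int set \<Rightarrow> bool" where
  "above f n C m D \<longleftrightarrow> n \<le> m \<and> is_cycle f m D \<and> (\<lambda>y. y mod 2^n) ` D \<subseteq> C"

definition lifts :: "z2 poly \<Rightarrow> nat \<Rightarrow> int set \<Rightarrow> int set set" where
  "lifts f n C = {D. above f n C (Suc n) D}"

definition grows :: "z2 poly \<Rightarrow> nat \<Rightarrow> int set \<Rightarrow> bool" where
  "grows f n C \<longleftrightarrow> (\<exists>D. lifts f n C = {D} \<and> card D = 2 * card C)"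

definition splits :: "z2 poly \<Rightarrow> nat \<Rightarrow> int set \<Rightarrow> bool" where
  "splits f n C \<longleftrightarrow> card (lifts f n C) = 2 \<and> (\<forall>D \<in> lifts f n C. card D = card C)"

text \<open>Value at x of the formal derivative of p (written out, since pderiv in the library
  requires a ring without zero divisors type class).\<close>
definition deriv_at :: "z2 poly \<Rightarrow> z2 \<Rightarrow> z2" where
  "deriv_at p x = (\<Sum>i\<le>degree p. of_nat i * coeff p i * x ^ (i - 1))"

text \<open>a_n(x) = (f^k)'(x) and b_n(x) = (f^k(x) - x)/2^n, k the length of the cycle C at level n.\<close>
definition acoef :: "z2 poly \<Rightarrow> nat \<Rightarrow> int set \<Rightarrow> z2 \<Rightarrow> z2" where
  "acoef f n C x = deriv_at (piter f (card C)) x"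

definition bcoef :: "z2 poly \<Rightarrow> nat \<Rightarrow> int set \<Rightarrow> z2 \<Rightarrow> z2" where
  "bcoef f n C x = (THE y. poly (piter f (card C)) x - x = 2 ^ n * y)"

definition Aval :: "z2 poly \<Rightarrow> nat \<Rightarrow> int set \<Rightarrow> z2 \<Rightarrow> enat" where
  "Aval f n C x = v2 (acoef f n C x - 1)"

definition Bval :: "z2 poly \<Rightarrow> nat \<Rightarrow> int set \<Rightarrow> z2 \<Rightarrow> enat" where
  "Bval f n C x = v2 (bcoef f n C x)"

definition strongly_grows :: "z2 poly \<Rightarrow> nat \<Rightarrow> int set \<Rightarrow> bool" where
  "strongly_grows f n C \<longleftrightarrow> (\<forall>x. red n x \<in> C \<longrightarrow>
      (4::z2) dvd (acoef f n C x - 1) \<and> \<not> (2::z2) dvd bcoef f n C x)"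

definition strongly_splits :: "z2 poly \<Rightarrow> nat \<Rightarrow> int set \<Rightarrow> bool" where
  "strongly_splits f n C \<longleftrightarrow> (\<forall>x. red n x \<in> C \<longrightarrow>
      (4::z2) dvd (acoef f n C x - 1) \<and> (2::z2) dvd bcoef f n C x)"

end

theory Submission
  imports Defs "HOL-Combinatorics.Orbits"
begin

text \<open>For a cycle of length \<open>k\<close> of \<open>f\<^sub>n\<close> write \<open>a = (f\<^sup>k)'(x)\<close> and \<open>b = (f\<^sup>k(x) - x)/2\<^sup>n\<close>.
  Taylor expansion shows that \<open>a\<close> modulo \<open>2\<^sup>n\<close>, and the divisibility of \<open>b\<close> by powers of two up
  to \<open>v\<^sub>2(a - 1)\<close>, do not depend on the representative \<open>x\<close>. If \<open>b\<close> is even, \<open>f\<^sup>k\<close> fixes every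
  point modulo \<open>2\<^sup>n\<^sup>+\<^sup>1\<close>, so the cycle splits into two lifts of the same length, with the same \<open>a\<close>
  and with \<open>b\<close> halved; if \<open>a \<equiv> 1 (mod 4)\<close> and \<open>b\<close> is odd, the cycle grows, and so does every
  cycle above it. So when \<open>v\<^sub>2(b) < v\<^sub>2(a - 1)\<close> the cycle keeps splitting until \<open>b\<close> becomes odd,
  at level \<open>n + v\<^sub>2(b)\<close>. When \<open>A = v\<^sub>2(a - 1) \<le> v\<^sub>2(b)\<close>, replacing \<open>x\<close> by \<open>x + 2\<^sup>n\<close> adds
  \<open>a - 1\<close> to \<open>b\<close>, so \<open>2\<^sup>A\<^sup>+\<^sup>1\<close> divides \<open>b\<close> at exactly one of these two representatives, which lie
  on different lifts. After halving \<open>b\<close>, one lift is again in the case \<open>v\<^sub>2(a - 1) \<le> v\<^sub>2(b)\<close>, while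
  the other has \<open>v\<^sub>2(b) = A - 1 < v\<^sub>2(a - 1)\<close> and falls into the first case.\<close>

lemma red_range: "0 \<le> red n y \<and> red n y < 2 ^ n"
  by transfer (simp add: z2_seq_def)

lemma z2_seq_mod_le: "z2_seq s \<Longrightarrow> j \<le> m \<Longrightarrow> s m mod 2 ^ j = s j"
proof (induction m)
  case 0
  then have "0 \<le> s 0" "s 0 < 1" unfolding z2_seq_def by (metis power_0)+
  then show ?case using 0 by simp
next
  case (Suc m)
  show ?case
  proof (cases "j = Suc m")
    case True
    then show ?thesis using Suc.prems z2_seq_mod[of s "Suc m"] by simp
  next
    case False
    then have "j \<le> m" using Suc.prems by simp
    have "s (Suc m) mod 2 ^ j = s (Suc m) mod 2 ^ m mod 2 ^ j"
      using \<open>j \<le> m\<close> by (simp add: mod_mod_cancel le_imp_power_dvd)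
    also have "\<dots> = s m mod 2 ^ j" using Suc.prems by (simp add: z2_seq_def)
    finally show ?thesis using Suc \<open>j \<le> m\<close> by simp
  qed
qed

lemma red_mod: "j \<le> m \<Longrightarrow> red m y mod 2 ^ j = red j y"
  by transfer (rule z2_seq_mod_le)

lemma red_Suc_mod: "red (Suc n) y mod 2 ^ n = red n y"
  by (simp add: red_mod)

lemma red_add: "red n (a + b) = (red n a + red n b) mod 2 ^ n"
  by transfer simp

lemma red_diff: "red n (a - b) = (red n a - red n b) mod 2 ^ n"
  by transfer simp

lemma red_minus: "red n (- a) = (- red n a) mod 2 ^ n"
  by transfer simp

lemma red_mult: "red n (a * b) = (red n a * red n b) mod 2 ^ n"
  by transfer simp

lemma red_one: "red n 1 = 1 mod 2 ^ n"
  by transfer simp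

lemma red_zero: "red n 0 = 0"
  by transfer simp

lemma z2_eqI: "(\<And>n. red n a = red n b) \<Longrightarrow> a = b"
  by transfer auto

lemma red_mod_self: "red n y mod 2 ^ n = red n y"
  using red_range[of n y] by simp

lemma red_of_nat: "red n (of_nat k) = int k mod 2 ^ n"
  by (induction k) (simp_all add: red_zero red_add red_one mod_add_right_eq mod_add_left_eq)

lemma red_of_int: "red n (of_int r) = r mod 2 ^ n"
proof (cases "r \<ge> 0")
  case True
  then obtain k where "r = int k" by (metis nonneg_eq_int)
  then show ?thesis by (simp add: red_of_nat)
next
  case False
  then obtain k where "r = - int k" by (intro that[of "nat (- r)"]) simp
  then show ?thesis by (simp add: red_minus red_of_nat mod_minus_eq)
qed

lemma red_of_int_red: "red n (of_int (red n y)) = red n y"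
  by (simp add: red_of_int red_mod_self)

lemma red_two_power: "red n ((2::z2) ^ k) = 2 ^ k mod 2 ^ n"
  using red_of_int[of n "2 ^ k"] by simp

lemma z2_seq_shift_div:
  assumes s: "z2_seq s" and sj: "s j = 0"
  shows "z2_seq (\<lambda>m. s (m + j) div 2 ^ j)" and "s (m + j) = 2 ^ j * (s (m + j) div 2 ^ j)"
proof -
  have dvd: "2 ^ j dvd s (m + j)" for m
    using z2_seq_mod_le[OF s, of j "m + j"] sj by (simp add: dvd_eq_mod_eq_0)
  then show "s (m + j) = 2 ^ j * (s (m + j) div 2 ^ j)" by simp
  define c where "c m = s (m + j) div 2 ^ j" for m
  have sc: "s (m + j) = 2 ^ j * c m" for m using dvd[of m] unfolding c_def by simp
  have "z2_seq c"
    unfolding z2_seq_def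
  proof (intro allI conjI)
    fix m
    have r: "0 \<le> s (m + j)" "s (m + j) < 2 ^ j * 2 ^ m"
      using s unfolding z2_seq_def by (metis power_add mult.commute)+
    then show "0 \<le> c m" "c m < 2 ^ m" using sc[of m] by (auto simp: zero_le_mult_iff)
    have "s (Suc m + j) mod 2 ^ (m + j) = s (m + j)"
      using z2_seq_mod_le[OF s, of "m + j" "Suc m + j"] by simp
    then have "2 ^ j * (c (Suc m) mod 2 ^ m) = 2 ^ j * c m"
      using sc[of m] sc[of "Suc m"] by (simp add: power_add mult.commute mod_mult_mult1)
    then show "c (Suc m) mod 2 ^ m = c m" by simp
  qed
  then show "z2_seq (\<lambda>m. s (m + j) div 2 ^ j)" unfolding c_def .
qed

lemma two_power_dvd_iff_red: "(2::z2) ^ j dvd y \<longleftrightarrow> red j y = 0"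
proof
  assume "2 ^ j dvd y"
  then show "red j y = 0" by (auto simp: red_mult red_two_power)
next
  assume red: "red j y = 0"
  define s where "s = Rep_z2 y"
  have s: "z2_seq s" using Rep_z2 s_def by simp
  have rs: "red m y = s m" for m unfolding s_def by transfer simp
  define c where "c = Abs_z2 (\<lambda>m. s (m + j) div 2 ^ j)"
  have rc: "red m c = s (m + j) div 2 ^ j" for m
    unfolding c_def using z2_seq_shift_div(1)[OF s] red rs
    by (simp add: red.rep_eq Abs_z2_inverse)
  have "y = 2 ^ j * c"
  proof (rule z2_eqI)
    fix m
    have "red m (2 ^ j * c) = 2 ^ j * (s (m + j) div 2 ^ j) mod 2 ^ m"
      by (simp add: red_mult red_two_power rc mod_mult_left_eq)
    also have "\<dots> = s m"
      using z2_seq_shift_div(2)[OF s, of j m] z2_seq_mod_le[OF s, of m "m + j"] red rs by simp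
    finally show "red m y = red m (2 ^ j * c)" using rs by simp
  qed
  then show "2 ^ j dvd y" by simp
qed

lemma red_eq_iff_dvd: "red n a = red n b \<longleftrightarrow> (2::z2) ^ n dvd a - b"
proof -
  have "(2::z2) ^ n dvd a - b \<longleftrightarrow> (red n a - red n b) mod 2 ^ n = 0"
    by (simp add: two_power_dvd_iff_red red_diff)
  also have "\<dots> \<longleftrightarrow> red n a mod 2 ^ n = red n b mod 2 ^ n"
    by (simp add: mod_eq_dvd_iff dvd_eq_mod_eq_0)
  finally show ?thesis by (simp add: red_mod_self)
qed

lemma z2_eq_0_if_dvd_all_powers: "(\<And>N. (2::z2) ^ N dvd y) \<Longrightarrow> y = 0"
  by (rule z2_eqI) (simp add: two_power_dvd_iff_red red_zero)

lemma two_times_eq_0_iff: "2 * (y::z2) = 0 \<longleftrightarrow> y = 0"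
proof
  assume "2 * y = 0"
  have "red m y = 0" for m
  proof (cases "m = 0")
    case True
    then show ?thesis using red_range[of 0 y] by simp
  next
    case False
    have "red (Suc m) (2 * y) = 0" using \<open>2 * y = 0\<close> by (simp add: red_zero)
    moreover have "red (Suc m) 2 = 2" using red_two_power[of "Suc m" 1] False by simp
    ultimately have "(2 * red (Suc m) y) mod (2 * 2 ^ m) = 0"
      by (simp add: red_mult mod_mult_left_eq)
    then have "red (Suc m) y mod 2 ^ m = 0" by (simp add: mod_mult_mult1)
    then show "red m y = 0" by (simp add: red_Suc_mod)
  qed
  then show "y = 0" by (intro z2_eqI) (simp add: red_zero)
qed simp

lemma two_power_mult_cancel: "(2::z2) ^ j * y = 2 ^ j * y' \<Longrightarrow> y = y'"
proof (induction j arbitrary: y y')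
  case (Suc j)
  then have "2 ^ j * (2 * y) = 2 ^ j * (2 * y')" by (simp add: algebra_simps)
  then have "2 * y = 2 * y'" using Suc.IH by blast
  then have "2 * (y - y') = 0" by (simp add: algebra_simps)
  then show ?case unfolding two_times_eq_0_iff by simp
qed simp

lemma two_power_dvd_two_power_mult_iff: "(2::z2) ^ (j + i) dvd 2 ^ i * y \<longleftrightarrow> 2 ^ j dvd y"
proof
  assume "2 ^ (j + i) dvd 2 ^ i * y"
  then obtain c where "2 ^ i * y = 2 ^ i * (2 ^ j * c)" by (auto simp: power_add algebra_simps)
  then show "2 ^ j dvd y" by (metis two_power_mult_cancel dvd_triv_left)
next
  assume "2 ^ j dvd y"
  then show "2 ^ (j + i) dvd 2 ^ i * y" by (auto simp: power_add algebra_simps)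
qed

lemma two_dvd_iff_red_1: "(2::z2) dvd u \<longleftrightarrow> red 1 u = 0"
  using two_power_dvd_iff_red[of 1] by simp

lemma odd_iff_red_1: "\<not> (2::z2) dvd u \<longleftrightarrow> red 1 u = 1"
  using two_dvd_iff_red_1[of u] red_range[of 1 u] by auto

lemma odd_mult_iff: "\<not> (2::z2) dvd u * v \<longleftrightarrow> \<not> 2 dvd u \<and> \<not> 2 dvd v"
proof -
  have "red 1 u = 0 \<or> red 1 u = 1" "red 1 v = 0 \<or> red 1 v = 1"
    using red_range[of 1 u] red_range[of 1 v] by auto
  then show ?thesis by (auto simp: odd_iff_red_1 red_mult)
qed

lemma even_add_odd_odd:
  assumes "\<not> (2::z2) dvd u" "\<not> 2 dvd v"
  shows "2 dvd u + v"
proof -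
  have "red 1 u = 1" "red 1 v = 1" using assms odd_iff_red_1 by auto
  then show ?thesis by (simp add: two_dvd_iff_red_1 red_add)
qed

lemma two_dvd_if_four_dvd: "(4::z2) dvd u \<Longrightarrow> 2 dvd u"
  by (rule dvd_trans[of _ 4]) (simp_all add: dvdI[of _ _ 2])

lemma odd_if_four_dvd_pred: "(4::z2) dvd u - 1 \<Longrightarrow> \<not> 2 dvd u"
proof
  assume "(4::z2) dvd u - 1" "2 dvd u"
  then have "(2::z2) dvd u - (u - 1)" by (meson dvd_diff two_dvd_if_four_dvd)
  then show False by (simp add: two_dvd_iff_red_1 red_one)
qed

lemma odd_mult_dvd_iff:
  assumes "\<not> (2::z2) dvd u"
  shows "(2::z2) ^ j dvd u * y \<longleftrightarrow> 2 ^ j dvd y"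
proof (cases "j = 0")
  case False
  have "red j u mod 2 = red 1 u" using red_mod[of 1 j u] False by simp
  then have "coprime ((2::int) ^ j) (red j u)"
    using assms by (simp add: odd_iff_red_1 odd_iff_mod_2_eq_one)
  then have "2 ^ j dvd red j u * red j y \<longleftrightarrow> 2 ^ j dvd red j y"
    by (simp add: coprime_dvd_mult_right_iff)
  moreover have "2 ^ j dvd red j y \<longleftrightarrow> red j y = 0"
    using red_range[of j y] by (auto simp: zdvd_not_zless dest: zdvd_imp_le)
  ultimately show ?thesis
    by (simp add: two_power_dvd_iff_red red_mult dvd_eq_mod_eq_0)
qed simp

lemma v2_ge_iff: "enat j \<le> v2 y \<longleftrightarrow> (2::z2) ^ j dvd y"
proof (cases "y = 0")
  case False
  then obtain N where N: "\<not> (2::z2) ^ N dvd y" using z2_eq_0_if_dvd_all_powers by blast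
  have bound: "(2::z2) ^ m dvd y \<Longrightarrow> m \<le> N" for m
    using N power_le_dvd by (metis nat_le_linear)
  have "enat j \<le> v2 y \<longleftrightarrow> j \<le> (GREATEST m. (2::z2) ^ m dvd y)"
    using False by (simp add: v2_def)
  also have "\<dots> \<longleftrightarrow> 2 ^ j dvd y"
    using GreatestI_nat[of "\<lambda>m. (2::z2) ^ m dvd y" 0 N] Greatest_le_nat[of "\<lambda>m. (2::z2) ^ m dvd y" j N]
      bound power_le_dvd by auto
  finally show ?thesis .
qed (simp add: v2_def)

lemma v2_eq_iff: "v2 y = enat j \<longleftrightarrow> (2::z2) ^ j dvd y \<and> \<not> 2 ^ Suc j dvd y"
proof -
  have "v2 y = enat j \<longleftrightarrow> enat j \<le> v2 y \<and> \<not> enat (Suc j) \<le> v2 y"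
    by (cases "v2 y") auto
  then show ?thesis by (simp add: v2_ge_iff)
qed

section \<open>The formal derivative\<close>

lemma power_add_expansion:
  fixes x h :: "'a::comm_ring_1"
  shows "\<exists>Q. (x + h) ^ i = x ^ i + of_nat i * h * x ^ (i - 1) + h ^ 2 * Q"
proof (induction i)
  case 0
  show ?case by (rule exI[of _ 0]) simp
next
  case (Suc i)
  then obtain Q where Q: "(x + h) ^ i = x ^ i + of_nat i * h * x ^ (i - 1) + h ^ 2 * Q" by blast
  have xi: "of_nat i * x ^ (i - 1) * x = of_nat i * x ^ i"
    by (cases i) (simp_all add: mult.commute)
  have "(x + h) ^ Suc i = (x + h) * (x ^ i + of_nat i * h * x ^ (i - 1) + h ^ 2 * Q)"
    using Q by simp
  also have "\<dots> = x ^ Suc i + of_nat (Suc i) * h * x ^ (Suc i - 1)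
      + h ^ 2 * (of_nat i * x ^ (i - 1) + (x + h) * Q)"
    using xi by (simp add: algebra_simps power2_eq_square)
  finally show ?case by blast
qed

lemma poly_taylor: "\<exists>Q. poly p (x + h) = poly p x + h * deriv_at p x + h ^ 2 * Q"
proof -
  have "\<forall>i. \<exists>Q. (x + h) ^ i = x ^ i + of_nat i * h * x ^ (i - 1) + h ^ 2 * Q"
    using power_add_expansion by blast
  then obtain Q where Q: "\<And>i. (x + h) ^ i = x ^ i + of_nat i * h * x ^ (i - 1) + h ^ 2 * Q i"
    by metis
  have "poly p (x + h) = (\<Sum>i\<le>degree p. coeff p i * (x + h) ^ i)" by (simp add: poly_altdef)
  also have "\<dots> = (\<Sum>i\<le>degree p. coeff p i * x ^ i + h * (of_nat i * coeff p i * x ^ (i - 1))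
      + h ^ 2 * (coeff p i * Q i))"
    by (rule sum.cong[OF refl]) (subst Q, simp add: algebra_simps)
  also have "\<dots> = poly p x + h * deriv_at p x + h ^ 2 * (\<Sum>i\<le>degree p. coeff p i * Q i)"
    by (simp add: sum.distrib sum_distrib_left poly_altdef deriv_at_def)
  finally show ?thesis by blast
qed

lemma poly_diff_dvd: "y - x dvd poly p y - poly p (x::z2)"
proof -
  obtain Q where "poly p (x + (y - x)) = poly p x + (y - x) * deriv_at p x + (y - x) ^ 2 * Q"
    using poly_taylor by blast
  then have "poly p y - poly p x = (y - x) * (deriv_at p x + (y - x) * Q)"
    by (simp add: algebra_simps power2_eq_square)
  then show ?thesis by simp
qed

lemma deriv_at_diff_dvd: "h dvd deriv_at p (x + h) - deriv_at p x"
proof -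
  have power_diff: "h dvd (x + h) ^ i - x ^ i" for i :: nat
  proof -
    obtain Q where "(x + h) ^ i = x ^ i + of_nat i * h * x ^ (i - 1) + h ^ 2 * Q"
      using power_add_expansion by blast
    then have "(x + h) ^ i - x ^ i = h * (of_nat i * x ^ (i - 1) + h * Q)"
      by (simp add: algebra_simps power2_eq_square)
    then show ?thesis by simp
  qed
  have "deriv_at p (x + h) - deriv_at p x =
      (\<Sum>i\<le>degree p. of_nat i * coeff p i * ((x + h) ^ (i - 1) - x ^ (i - 1)))"
    by (simp add: deriv_at_def sum_subtractf algebra_simps)
  also have "h dvd \<dots>"
    by (rule dvd_sum) (simp add: power_diff)
  finally show ?thesis .
qed

text \<open>In \<open>\<int>\<^sub>2\<close> the linear term of a Taylor expansion is unique: evaluate at \<open>h = 2^N\<close>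
  for every \<open>N\<close> and cancel.\<close>
lemma deriv_at_unique:
  assumes "\<And>h. \<exists>Q. poly p (x + h) = poly p x + h * d + h ^ 2 * Q"
  shows "d = deriv_at p x"
proof -
  have "(2::z2) ^ N dvd d - deriv_at p x" for N
  proof -
    obtain Q where Q: "poly p (x + 2 ^ N) = poly p x + 2 ^ N * d + (2 ^ N) ^ 2 * Q"
      using assms by blast
    obtain Q' where Q': "poly p (x + 2 ^ N) = poly p x + 2 ^ N * deriv_at p x + (2 ^ N) ^ 2 * Q'"
      using poly_taylor by blast
    have "2 ^ N * (d - deriv_at p x) = 2 ^ N * (2 ^ N * (Q' - Q))"
      using Q Q' by (simp add: algebra_simps power2_eq_square)
    then show ?thesis using two_power_mult_cancel by (metis dvd_triv_left)
  qed
  then have "d - deriv_at p x = 0" by (rule z2_eq_0_if_dvd_all_powers)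
  then show ?thesis by simp
qed

lemma deriv_at_chain:
  assumes "\<And>y. poly r y = poly p (poly q y)"
  shows "deriv_at r x = deriv_at p (poly q x) * deriv_at q x"
proof (rule deriv_at_unique[symmetric])
  fix h
  obtain Q1 where Q1: "poly q (x + h) = poly q x + h * deriv_at q x + h ^ 2 * Q1"
    using poly_taylor by blast
  define H where "H = h * deriv_at q x + h ^ 2 * Q1"
  obtain Q2 where Q2: "poly p (poly q x + H) = poly p (poly q x) + H * deriv_at p (poly q x) + H ^ 2 * Q2"
    using poly_taylor by blast
  have "poly r (x + h) = poly p (poly q x + H)" using assms Q1 H_def by (simp add: add.assoc)
  also have "\<dots> = poly p (poly q x) + H * deriv_at p (poly q x) + H ^ 2 * Q2" by (rule Q2)
  also have "\<dots> = poly r x + h * (deriv_at p (poly q x) * deriv_at q x)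
     + h ^ 2 * (Q1 * deriv_at p (poly q x) + (deriv_at q x + h * Q1) ^ 2 * Q2)"
    unfolding assms H_def by (simp add: algebra_simps power2_eq_square)
  finally show "\<exists>Q. poly r (x + h) = poly r x + h * (deriv_at p (poly q x) * deriv_at q x) + h ^ 2 * Q"
    by blast
qed

lemma poly_piter: "poly (piter f k) y = (poly f ^^ k) y"
  by (induction k arbitrary: y) (simp_all add: poly_pcompose)

lemma poly_piter_add: "poly (piter f (a + b)) y = poly (piter f a) (poly (piter f b) y)"
  by (simp add: poly_piter funpow_add)

lemma deriv_at_piter_Suc:
  "deriv_at (piter f (Suc k)) z = deriv_at (piter f k) (poly f z) * deriv_at f z"
  "deriv_at (piter f (Suc k)) z = deriv_at f (poly (piter f k) z) * deriv_at (piter f k) z"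
proof -
  have "poly (piter f (Suc k)) y = poly (piter f k) (poly f y)" for y
    using poly_piter_add[of f k 1 y] by (simp add: poly_piter)
  then show "deriv_at (piter f (Suc k)) z = deriv_at (piter f k) (poly f z) * deriv_at f z"
    by (rule deriv_at_chain)
  show "deriv_at (piter f (Suc k)) z = deriv_at f (poly (piter f k) z) * deriv_at (piter f k) z"
    by (rule deriv_at_chain) (simp add: poly_pcompose)
qed

section \<open>Periodic points\<close>

lemma periodic_point_orbit:
  assumes "y \<in> orbit g y"
  shows "finite (orbit g y)"
    and "0 < card (orbit g y)"
    and "(g ^^ card (orbit g y)) y = y"
    and "0 < i \<Longrightarrow> i < card (orbit g y) \<Longrightarrow> (g ^^ i) y \<noteq> y"
    and "orbit g y = {(g ^^ i) y | i. i < card (orbit g y)}"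
    and "(g ^^ N) y = y \<Longrightarrow> card (orbit g y) dvd N"
proof -
  have card: "card (orbit g y) = funpow_dist1 g y y"
    using orbit_conv_funpow_dist1[OF assms] inj_on_funpow_dist1[OF assms]
    by (simp add: card_image)
  show "finite (orbit g y)" using finite_orbit[OF assms] .
  show pos: "0 < card (orbit g y)" using card by simp
  show period: "(g ^^ card (orbit g y)) y = y" using card funpow_dist1_prop[OF assms] by simp
  show least: "0 < i \<Longrightarrow> i < card (orbit g y) \<Longrightarrow> (g ^^ i) y \<noteq> y" for i
    using card funpow_dist1_least by metis
  show "orbit g y = {(g ^^ i) y | i. i < card (orbit g y)}"
    using orbit_altdef_bounded[OF period] card by simp
  show "card (orbit g y) dvd N" if "(g ^^ N) y = y"
  proof -
    have "(g ^^ (N mod card (orbit g y))) y = y" using funpow_mod_eq[OF period] that by simp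
    then have "N mod card (orbit g y) = 0" using least pos by (metis mod_less_divisor neq0_conv)
    then show ?thesis by (simp add: dvd_eq_mod_eq_0)
  qed
qed

lemma periodic_orbit_eq:
  assumes "0 < k" "(g ^^ k) x = x" "y \<in> {(g ^^ i) x | i. i < k}"
  shows "{(g ^^ i) x | i. i < k} = orbit g y" and "y \<in> orbit g y"
proof -
  have Ox: "orbit g x = {(g ^^ i) x | i. i < k}" using orbit_altdef_bounded[OF assms(2,1)] .
  have x: "x \<in> orbit g x" unfolding orbit_altdef using assms(1,2) by force
  have y: "y \<in> orbit g x" using assms(3) Ox by simp
  have "orbit g x = orbit g y"
    using orbit_trans[OF _ y] orbit_trans[OF _ orbit_swap[OF x y]] by blast
  then show "{(g ^^ i) x | i. i < k} = orbit g y" using Ox by simp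
  show "y \<in> orbit g y" using self_in_orbit_trans[OF x y] .
qed

lemma red_poly_cong: "red n a = red n b \<Longrightarrow> red n (poly p a) = red n (poly p b)"
  using poly_diff_dvd[of a b p] by (auto simp: red_eq_iff_dvd intro: dvd_trans)

lemma fn_red: "fn f n (red n y) = red n (poly f y)"
  unfolding fn_def by (rule red_poly_cong) (simp add: red_of_int_red)

lemma funpow_fn_red: "(fn f n ^^ i) (red n y) = red n (poly (piter f i) y)"
  by (induction i) (simp_all add: fn_red poly_piter poly_pcompose)

lemma cycle_orbit:
  assumes "is_cycle f n C" "red n z \<in> C"
  shows "C = orbit (fn f n) (red n z)" and "red n z \<in> orbit (fn f n) (red n z)"
proof -
  obtain x k where "0 < k" "(fn f n ^^ k) x = x" "C = {(fn f n ^^ i) x | i. i < k}"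
    using assms(1) unfolding is_cycle_def by blast
  then show "C = orbit (fn f n) (red n z)" and "red n z \<in> orbit (fn f n) (red n z)"
    using periodic_orbit_eq[of k "fn f n" x "red n z"] assms(2) by simp_all
qed

lemma
  assumes C: "is_cycle f n C" and z: "red n z \<in> C"
  shows cycle_finite: "finite C"
    and cycle_card_pos: "0 < card C"
    and cycle_period: "red n (poly (piter f (card C)) z) = red n z"
    and cycle_period_least: "0 < i \<Longrightarrow> i < card C \<Longrightarrow> red n (poly (piter f i) z) \<noteq> red n z"
    and cycle_eq_iterates: "C = {red n (poly (piter f i) z) | i. i < card C}"
    and cycle_period_dvd: "red n (poly (piter f N) z) = red n z \<Longrightarrow> card C dvd N"
  using periodic_point_orbit[OF cycle_orbit(2)[OF C z]] unfolding cycle_orbit(1)[OF C z, symmetric]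
  by (simp_all add: funpow_fn_red)

lemma cycle_of_period:
  assumes "0 < k" "red n (poly (piter f k) z) = red n z"
  shows "is_cycle f n {red n (poly (piter f i) z) | i. i < k}"
  unfolding is_cycle_def
  by (rule exI[of _ "red n z"], rule exI[of _ k]) (use assms red_range in \<open>simp add: funpow_fn_red\<close>)

lemma cycle_subset: "is_cycle f n C \<Longrightarrow> C \<subseteq> {0..<2 ^ n}"
proof
  fix r assume "is_cycle f n C" "r \<in> C"
  then obtain x i where "x \<in> {0..<2 ^ n}" "r = (fn f n ^^ i) x"
    unfolding is_cycle_def by blast
  then have "r = (fn f n ^^ i) (red n (of_int x))" by (simp add: red_of_int)
  then show "r \<in> {0..<2 ^ n}" using red_range by (simp add: funpow_fn_red)
qed

lemma cycle_red_of_int: "is_cycle f n C \<Longrightarrow> r \<in> C \<Longrightarrow> red n (of_int r) = r"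
  using cycle_subset by (force simp: red_of_int)

lemma cycle_nonempty: "is_cycle f n C \<Longrightarrow> \<exists>z. red n z \<in> C"
  using cycle_red_of_int unfolding is_cycle_def by blast

lemma cycle_iterate_mem: "is_cycle f n C \<Longrightarrow> red n z \<in> C \<Longrightarrow> red n (poly (piter f i) z) \<in> C"
  using funpow_in_orbit[OF cycle_orbit(2), of f n C z i] cycle_orbit(1)[of f n C z]
  by (simp add: funpow_fn_red)

lemma cycle_eq:
  assumes "is_cycle f n C" "is_cycle f n D" "red n z \<in> C" "red n z \<in> D"
  shows "C = D"
  using cycle_orbit(1)[OF assms(1,3)] cycle_orbit(1)[OF assms(2,4)] by simp

section \<open>Changing the representative\<close>

lemma bcoef_eqI: "poly (piter f (card C)) z - z = 2 ^ n * y \<Longrightarrow> bcoef f n C z = y"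
  unfolding bcoef_def by (rule the_equality) (auto intro: two_power_mult_cancel)

lemma cycle_displacement:
  assumes "is_cycle f n C" "red n z \<in> C"
  shows "poly (piter f (card C)) z - z = 2 ^ n * bcoef f n C z"
proof -
  obtain y where "poly (piter f (card C)) z - z = 2 ^ n * y"
    using cycle_period[OF assms] by (auto simp: red_eq_iff_dvd)
  then show ?thesis using bcoef_eqI by metis
qed

lemma acoef_shift_dvd: "(2::z2) ^ n dvd acoef f n C (z + 2 ^ n * t) - acoef f n C z"
  unfolding acoef_def using deriv_at_diff_dvd dvd_trans dvd_triv_left by blast

lemma bcoef_shift:
  assumes "is_cycle f n C" "red n z \<in> C"
  shows "\<exists>Q. bcoef f n C (z + 2 ^ n * t) = bcoef f n C z + t * (acoef f n C z - 1) + 2 ^ n * t ^ 2 * Q"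
proof -
  define G where "G = piter f (card C)"
  obtain Q where Q: "poly G (z + 2 ^ n * t) = poly G z + 2 ^ n * t * deriv_at G z + (2 ^ n * t) ^ 2 * Q"
    using poly_taylor by blast
  have "poly G z - z = 2 ^ n * bcoef f n C z" using cycle_displacement[OF assms] G_def by simp
  then have "poly G (z + 2 ^ n * t) - (z + 2 ^ n * t) =
      2 ^ n * (bcoef f n C z + t * (acoef f n C z - 1) + 2 ^ n * t ^ 2 * Q)"
    using Q unfolding acoef_def G_def[symmetric]
    by (simp add: algebra_simps power2_eq_square power_mult_distrib)
  then show ?thesis using bcoef_eqI G_def by blast
qed

lemma odd_deriv_at_if_odd_acoef:
  assumes "is_cycle f n C" "red n z \<in> C" "\<not> 2 dvd acoef f n C z"
  shows "\<not> 2 dvd deriv_at f z"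
proof -
  obtain k where "card C = Suc k" using cycle_card_pos[OF assms(1,2)] gr0_implies_Suc by blast
  then have "acoef f n C z = deriv_at (piter f k) (poly f z) * deriv_at f z"
    unfolding acoef_def by (simp only: deriv_at_piter_Suc(1))
  then show ?thesis using assms(3) odd_mult_iff by metis
qed

text \<open>Along the cycle, \<open>f\<^sup>k \<circ> f = f \<circ> f\<^sup>k\<close> and the chain rule give
  \<open>a(f z) f'(z) = f'(f\<^sup>k z) a(z)\<close>, where \<open>f\<^sup>k z \<equiv> z (mod 2\<^sup>n)\<close>; since \<open>f'(z)\<close> is odd,
  \<open>a(f z) \<equiv> a(z)\<close> and \<open>b(f z) = f'(z) b(z) + 2\<^sup>n(\<dots>)\<close>.\<close>
lemma acoef_poly_dvd:
  assumes "is_cycle f n C" "red n z \<in> C" "\<not> 2 dvd acoef f n C z"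
  shows "(2::z2) ^ n dvd acoef f n C (poly f z) - acoef f n C z"
proof -
  define G where "G = piter f (card C)"
  have "poly G z = z + 2 ^ n * bcoef f n C z"
    using cycle_displacement[OF assms(1,2)] G_def by (simp add: algebra_simps)
  then have "(2::z2) ^ n dvd deriv_at f (poly G z) - deriv_at f z"
    using deriv_at_diff_dvd[of "2 ^ n * bcoef f n C z" f z] dvd_trans dvd_triv_left by metis
  then have "(2::z2) ^ n dvd (deriv_at f (poly G z) - deriv_at f z) * deriv_at G z"
    by (rule dvd_mult2)
  moreover have "(deriv_at f (poly G z) - deriv_at f z) * deriv_at G z =
      deriv_at f z * (deriv_at G (poly f z) - deriv_at G z)"
    using deriv_at_piter_Suc[of f "card C" z] unfolding G_def by (simp add: algebra_simps)
  ultimately show ?thesis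
    using odd_mult_dvd_iff[OF odd_deriv_at_if_odd_acoef[OF assms]] unfolding acoef_def G_def by simp
qed

lemma bcoef_poly_dvd_iff:
  assumes "is_cycle f n C" "red n z \<in> C" "\<not> 2 dvd acoef f n C z" "j \<le> n"
  shows "(2::z2) ^ j dvd bcoef f n C (poly f z) \<longleftrightarrow> 2 ^ j dvd bcoef f n C z"
proof -
  define G where "G = piter f (card C)"
  define b where "b = bcoef f n C z"
  have bz: "poly G z = z + 2 ^ n * b"
    using cycle_displacement[OF assms(1,2)] G_def b_def by (simp add: algebra_simps)
  obtain Q where Q: "poly f (z + 2 ^ n * b) = poly f z + 2 ^ n * b * deriv_at f z + (2 ^ n * b) ^ 2 * Q"
    using poly_taylor by blast
  have "poly G (poly f z) = poly f (poly G z)"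
    unfolding G_def using poly_piter_add[of f "card C" 1 z] poly_piter_add[of f 1 "card C" z]
    by (simp add: poly_piter)
  then have "poly G (poly f z) - poly f z = 2 ^ n * (b * deriv_at f z + 2 ^ n * (b ^ 2 * Q))"
    using Q bz by (simp add: algebra_simps power2_eq_square power_mult_distrib)
  then have bf: "bcoef f n C (poly f z) = b * deriv_at f z + 2 ^ n * (b ^ 2 * Q)"
    unfolding G_def by (rule bcoef_eqI)
  have "(2::z2) ^ j dvd 2 ^ n * (b ^ 2 * Q)"
    using assms(4) by (simp add: le_imp_power_dvd)
  then have "2 ^ j dvd bcoef f n C (poly f z) \<longleftrightarrow> 2 ^ j dvd deriv_at f z * b"
    unfolding bf by (simp add: dvd_add_left_iff mult.commute)
  also have "\<dots> \<longleftrightarrow> 2 ^ j dvd b"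
    using odd_mult_dvd_iff[OF odd_deriv_at_if_odd_acoef[OF assms(1-3)]] .
  finally show ?thesis unfolding b_def .
qed

definition reps_agree :: "z2 poly \<Rightarrow> nat \<Rightarrow> int set \<Rightarrow> z2 \<Rightarrow> z2 \<Rightarrow> bool" where
  "reps_agree f n C z w \<longleftrightarrow> (2::z2) ^ n dvd acoef f n C z - acoef f n C w \<and>
     (\<forall>j\<le>n. (2::z2) ^ j dvd acoef f n C z - 1 \<longrightarrow>
        ((2::z2) ^ j dvd bcoef f n C z \<longleftrightarrow> 2 ^ j dvd bcoef f n C w))"

lemma reps_agree_trans:
  assumes "reps_agree f n C z w" "reps_agree f n C w u"
  shows "reps_agree f n C z u"
  unfolding reps_agree_def
proof (intro conjI allI impI)
  let ?a = "acoef f n C"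
  have d1: "(2::z2) ^ n dvd ?a z - ?a w" and d2: "(2::z2) ^ n dvd ?a w - ?a u"
    using assms unfolding reps_agree_def by blast+
  have "?a z - ?a u = (?a z - ?a w) + (?a w - ?a u)" by simp
  then show "(2::z2) ^ n dvd ?a z - ?a u" using d1 d2 by (metis dvd_add)
  fix j assume j: "j \<le> n" "(2::z2) ^ j dvd ?a z - 1"
  have "(2::z2) ^ j dvd ?a z - ?a w" using d1 j(1) power_le_dvd by blast
  moreover have "?a w - 1 = (?a z - 1) - (?a z - ?a w)" by simp
  ultimately have "(2::z2) ^ j dvd ?a w - 1" using j(2) by (metis dvd_diff)
  then show "(2::z2) ^ j dvd bcoef f n C z \<longleftrightarrow> 2 ^ j dvd bcoef f n C u"
    using assms j unfolding reps_agree_def by blast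
qed

lemma reps_agree_shift:
  assumes "is_cycle f n C" "red n z \<in> C"
  shows "reps_agree f n C z (z + 2 ^ n * t)"
  unfolding reps_agree_def
proof (intro conjI allI impI)
  show "(2::z2) ^ n dvd acoef f n C z - acoef f n C (z + 2 ^ n * t)"
    using acoef_shift_dvd by (metis dvd_minus_iff minus_diff_eq)
  fix j assume j: "j \<le> n" "(2::z2) ^ j dvd acoef f n C z - 1"
  obtain Q where Q: "bcoef f n C (z + 2 ^ n * t) =
      bcoef f n C z + (t * (acoef f n C z - 1) + 2 ^ n * t ^ 2 * Q)"
    using bcoef_shift[OF assms, of t] by (auto simp: add.assoc)
  have "(2::z2) ^ j dvd t * (acoef f n C z - 1) + 2 ^ n * t ^ 2 * Q"
    using j by (intro dvd_add dvd_mult dvd_mult2 le_imp_power_dvd)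
  then show "(2::z2) ^ j dvd bcoef f n C z \<longleftrightarrow> 2 ^ j dvd bcoef f n C (z + 2 ^ n * t)"
    unfolding Q by (simp add: dvd_add_left_iff)
qed

lemma reps_agree_poly:
  assumes "is_cycle f n C" "red n z \<in> C" "\<not> 2 dvd acoef f n C z"
  shows "reps_agree f n C z (poly f z)"
  unfolding reps_agree_def
  using acoef_poly_dvd[OF assms] bcoef_poly_dvd_iff[OF assms]
  by (metis dvd_minus_iff minus_diff_eq)

text \<open>Every representative of a point of the cycle is reached from a given one by iterating \<open>f\<close>
  and then adding a multiple of \<open>2\<^sup>n\<close>.\<close>
lemma reps_agree_cycle:
  assumes C: "is_cycle f n C" and odd: "\<And>z. red n z \<in> C \<Longrightarrow> \<not> 2 dvd acoef f n C z"
    and x: "red n x \<in> C" and z: "red n z \<in> C"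
  shows "reps_agree f n C x z"
proof -
  have iter: "reps_agree f n C x (poly (piter f i) x)" for i
  proof (induction i)
    case 0
    then show ?case by (simp add: reps_agree_def)
  next
    case (Suc i)
    let ?y = "poly (piter f i) x"
    have y: "red n ?y \<in> C" using cycle_iterate_mem[OF C x] .
    have "reps_agree f n C x (poly f ?y)"
      using reps_agree_trans[OF Suc reps_agree_poly[OF C y odd[OF y]]] .
    then show ?case by (simp add: poly_pcompose)
  qed
  obtain i where "red n z = red n (poly (piter f i) x)" using cycle_eq_iterates[OF C x] z by blast
  then obtain t where t: "z = poly (piter f i) x + 2 ^ n * t"
    by (auto simp: red_eq_iff_dvd algebra_simps elim!: dvdE)
  show ?thesis
    using reps_agree_trans[OF iter reps_agree_shift[OF C cycle_iterate_mem[OF C x]]] t by simp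
qed

lemma acoef_cong:
  assumes "is_cycle f n C" "\<And>z. red n z \<in> C \<Longrightarrow> \<not> 2 dvd acoef f n C z"
    and "red n x \<in> C" "red n z \<in> C"
  shows "(2::z2) ^ n dvd acoef f n C x - acoef f n C z"
  using reps_agree_cycle[OF assms] unfolding reps_agree_def by blast

lemma acoef_pred_dvd_iff:
  assumes "is_cycle f n C" "\<And>z. red n z \<in> C \<Longrightarrow> \<not> 2 dvd acoef f n C z"
    and "red n x \<in> C" "red n z \<in> C" "j \<le> n"
  shows "(2::z2) ^ j dvd acoef f n C x - 1 \<longleftrightarrow> 2 ^ j dvd acoef f n C z - 1"
proof -
  have "(2::z2) ^ j dvd acoef f n C x - acoef f n C z"
    using acoef_cong[OF assms(1-4)] assms(5) power_le_dvd by blast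
  moreover have "acoef f n C x - 1 = (acoef f n C z - 1) + (acoef f n C x - acoef f n C z)"
    by simp
  ultimately show ?thesis by (metis dvd_add_left_iff)
qed

lemma bcoef_dvd_iff:
  assumes "is_cycle f n C" "\<And>z. red n z \<in> C \<Longrightarrow> \<not> 2 dvd acoef f n C z"
    and "red n x \<in> C" "red n z \<in> C" "j \<le> n" "(2::z2) ^ j dvd acoef f n C x - 1"
  shows "(2::z2) ^ j dvd bcoef f n C x \<longleftrightarrow> 2 ^ j dvd bcoef f n C z"
  using reps_agree_cycle[OF assms(1-4)] assms(5,6) unfolding reps_agree_def by blast

section \<open>Lifting a cycle by one level\<close>

lemma card_fibres:
  assumes "C \<subseteq> {0..<2 ^ n}" "finite C"
  shows "card {r \<in> {0..<2 ^ Suc n}. r mod 2 ^ n \<in> C} = 2 * card (C :: int set)"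
proof -
  let ?S = "{r \<in> {0..<2 ^ Suc n}. r mod 2 ^ n \<in> C}" and ?T = "(\<lambda>c. c + 2 ^ n) ` C"
  have "?S \<subseteq> C \<union> ?T"
  proof
    fix r assume r: "r \<in> ?S"
    show "r \<in> C \<union> ?T"
    proof (cases "r < 2 ^ n")
      case True
      then have "r mod 2 ^ n = r" using r by simp
      then show ?thesis using r by simp
    next
      case False
      have "r mod 2 ^ n = (r - 2 ^ n) mod 2 ^ n" by (simp add: mod_diff_eq[symmetric])
      also have "\<dots> = r - 2 ^ n" by (rule mod_pos_pos_trivial) (use False r in auto)
      finally show ?thesis using r by (auto intro: image_eqI[of _ _ "r - 2 ^ n"])
    qed
  qed
  moreover have "C \<union> ?T \<subseteq> ?S"
    using assms(1) by (auto simp: mod_pos_pos_trivial)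
  moreover have "C \<inter> ?T = {}"
  proof (rule ccontr)
    assume "C \<inter> ?T \<noteq> {}"
    then obtain c where "c \<in> C" "c + 2 ^ n \<in> C" by blast
    then have "0 \<le> c" "c + 2 ^ n < 2 ^ n" using assms(1) by auto
    then show False by simp
  qed
  ultimately have "?S = C \<union> ?T" "C \<inter> ?T = {}" by blast+
  then have "card ?S = card C + card ?T" using assms(2) by (simp add: card_Un_disjoint)
  then show ?thesis by (simp add: card_image)
qed

lemma above_red_mem:
  assumes "above f n C m D" "red m z \<in> D"
  shows "red n z \<in> C"
proof -
  have "red m z mod 2 ^ n \<in> C" using assms unfolding above_def by blast
  then show ?thesis using red_mod assms(1) unfolding above_def by simp
qed

lemma lifts_cycle: "D \<in> lifts f n C \<Longrightarrow> is_cycle f (Suc n) D"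
  unfolding lifts_def above_def by simp

lemma lifts_red_mem: "D \<in> lifts f n C \<Longrightarrow> red (Suc n) z \<in> D \<Longrightarrow> red n z \<in> C"
  using above_red_mem[of f n C "Suc n" D z] unfolding lifts_def by simp

lemma lifts_subset: "lifts f n C \<subseteq> Pow {r \<in> {0..<2 ^ Suc n}. r mod 2 ^ n \<in> C}"
proof
  fix D assume "D \<in> lifts f n C"
  then have "is_cycle f (Suc n) D" "(\<lambda>y. y mod 2 ^ n) ` D \<subseteq> C"
    unfolding lifts_def above_def by auto
  then have "D \<subseteq> {0..<2 ^ Suc n}" "(\<lambda>y. y mod 2 ^ n) ` D \<subseteq> C"
    using cycle_subset[of f "Suc n" D] by simp_all
  then show "D \<in> Pow {r \<in> {0..<2 ^ Suc n}. r mod 2 ^ n \<in> C}" by auto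
qed

lemma finite_fibres: "finite {r \<in> {0..<2 ^ Suc n}. r mod 2 ^ n \<in> (C :: int set)}"
  by (rule finite_subset[of _ "{0..<2 ^ Suc n}"]) auto

lemma finite_lifts: "finite (lifts f n C)"
  using finite_subset[OF lifts_subset] finite_fibres by blast

lemma finite_lift: "D \<in> lifts f n C \<Longrightarrow> finite D"
  using lifts_subset finite_fibres by (meson PowD finite_subset subsetD)

lemma lifts_disjoint: "pairwise disjnt (lifts f n C)"
  unfolding pairwise_def disjnt_def
proof (intro ballI impI)
  fix D D' assume D: "D \<in> lifts f n C" "D' \<in> lifts f n C" "D \<noteq> D'"
  show "D \<inter> D' = {}"
  proof (rule ccontr)
    assume "D \<inter> D' \<noteq> {}"
    then obtain r where r: "r \<in> D" "r \<in> D'" by blast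
    have c: "is_cycle f (Suc n) D" "is_cycle f (Suc n) D'" using D lifts_cycle by auto
    have "red (Suc n) (of_int r) = r" using cycle_red_of_int[OF c(1) r(1)] .
    then have "D = D'" using cycle_eq[OF c, of "of_int r"] r by simp
    then show False using D(3) by simp
  qed
qed

lemma orbit_in_lifts:
  assumes C: "is_cycle f n C" and z: "red n z \<in> C" and K: "0 < K"
    and per: "red (Suc n) (poly (piter f K) z) = red (Suc n) z"
  shows "{red (Suc n) (poly (piter f i) z) | i. i < K} \<in> lifts f n C"
    and "red (Suc n) z \<in> {red (Suc n) (poly (piter f i) z) | i. i < K}"
proof -
  show "red (Suc n) z \<in> {red (Suc n) (poly (piter f i) z) | i. i < K}"
    using K by (auto intro!: exI[of _ 0])
  show "{red (Suc n) (poly (piter f i) z) | i. i < K} \<in> lifts f n C"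
    unfolding lifts_def above_def
    using cycle_of_period[OF K per] cycle_iterate_mem[OF C z] by (auto simp: red_Suc_mod)
qed

text \<open>If every point of \<open>C\<close> returns modulo \<open>2\<^sup>n\<^sup>+\<^sup>1\<close> after exactly \<open>K\<close> steps, all lifts have length \<open>K\<close>,
  and counting the \<open>2 |C|\<close> residues above \<open>C\<close> determines how many lifts there are.\<close>
lemma
  assumes C: "is_cycle f n C" and K: "0 < K"
    and per: "\<And>z. red n z \<in> C \<Longrightarrow> red (Suc n) (poly (piter f K) z) = red (Suc n) z"
    and least: "\<And>z i. red n z \<in> C \<Longrightarrow> 0 < i \<Longrightarrow> i < K \<Longrightarrow>
        red (Suc n) (poly (piter f i) z) \<noteq> red (Suc n) z"
  shows card_lifts_eq_period: "D \<in> lifts f n C \<Longrightarrow> card D = K"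
    and card_lifts_mult_period: "card (lifts f n C) * K = 2 * card C"
    and ex_lifts_mem: "red n z \<in> C \<Longrightarrow> \<exists>D \<in> lifts f n C. red (Suc n) z \<in> D"
proof -
  show card: "card D = K" if D: "D \<in> lifts f n C" for D
  proof -
    obtain z where z: "red (Suc n) z \<in> D" using cycle_nonempty[OF lifts_cycle[OF D]] by blast
    note zC = lifts_red_mem[OF D z]
    have "card D dvd K" using cycle_period_dvd[OF lifts_cycle[OF D] z per[OF zC]] .
    then have "card D \<le> K" using K by (simp add: dvd_imp_le)
    moreover have "\<not> card D < K"
      using least[OF zC cycle_card_pos[OF lifts_cycle[OF D] z]] cycle_period[OF lifts_cycle[OF D] z]
      by blast
    ultimately show ?thesis by simp
  qed
  show ex: "\<exists>D \<in> lifts f n C. red (Suc n) z \<in> D" if "red n z \<in> C" for z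
    using orbit_in_lifts[OF C that K per[OF that]] by (rule bexI[rotated])
  let ?S = "{r \<in> {0..<2 ^ Suc n}. r mod 2 ^ n \<in> C}"
  have "\<Union>(lifts f n C) = ?S"
  proof
    show "\<Union>(lifts f n C) \<subseteq> ?S" using lifts_subset by blast
    show "?S \<subseteq> \<Union>(lifts f n C)"
    proof
      fix r assume "r \<in> ?S"
      then have "red (Suc n) (of_int r) = r" "red n (of_int r) \<in> C" by (simp_all add: red_of_int)
      then obtain D where "D \<in> lifts f n C" "red (Suc n) (of_int r) \<in> D" using ex by blast
      then show "r \<in> \<Union>(lifts f n C)" using \<open>red (Suc n) (of_int r) = r\<close> by auto
    qed
  qed
  then have "card ?S = sum card (lifts f n C)"
    using card_Union_disjoint[OF lifts_disjoint] finite_lift by metis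
  also have "\<dots> = card (lifts f n C) * K" using card by simp
  finally have "card ?S = card (lifts f n C) * K" .
  moreover obtain z where "red n z \<in> C" using cycle_nonempty[OF C] by blast
  ultimately show "card (lifts f n C) * K = 2 * card C"
    using card_fibres[OF cycle_subset[OF C] cycle_finite[OF C \<open>red n z \<in> C\<close>]] by simp
qed

text \<open>An even \<open>b\<close> means that \<open>f\<^sup>k\<close> fixes each point modulo \<open>2\<^sup>n\<^sup>+\<^sup>1\<close>, so the cycle splits
  into two lifts of the same length, along which \<open>b\<close> is halved.\<close>
lemma
  assumes C: "is_cycle f n C" and even: "\<And>z. red n z \<in> C \<Longrightarrow> 2 dvd bcoef f n C z"
  shows splits_if_even_bcoef: "splits f n C"
    and card_lifts_if_even_bcoef: "D \<in> lifts f n C \<Longrightarrow> card D = card C"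
    and ex_lifts_mem_if_even_bcoef: "red n z \<in> C \<Longrightarrow> \<exists>D \<in> lifts f n C. red (Suc n) z \<in> D"
    and lifts_coeffs_if_even_bcoef: "D \<in> lifts f n C \<Longrightarrow> red (Suc n) z \<in> D \<Longrightarrow>
        acoef f (Suc n) D z = acoef f n C z \<and> 2 * bcoef f (Suc n) D z = bcoef f n C z"
proof -
  have half: "\<exists>c. bcoef f n C z = 2 * c \<and> poly (piter f (card C)) z - z = 2 ^ Suc n * c"
    if z: "red n z \<in> C" for z
    using cycle_displacement[OF C z] even[OF z] by (auto elim!: dvdE)
  have per: "\<And>z. red n z \<in> C \<Longrightarrow> red (Suc n) (poly (piter f (card C)) z) = red (Suc n) z"
  proof -
    fix z assume "red n z \<in> C"
    then obtain c where "poly (piter f (card C)) z - z = 2 ^ Suc n * c" using half by blast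
    then show "red (Suc n) (poly (piter f (card C)) z) = red (Suc n) z" by (simp add: red_eq_iff_dvd)
  qed
  have least: "\<And>z i. red n z \<in> C \<Longrightarrow> 0 < i \<Longrightarrow> i < card C \<Longrightarrow>
      red (Suc n) (poly (piter f i) z) \<noteq> red (Suc n) z"
    using cycle_period_least[OF C] red_Suc_mod by metis
  have K: "0 < card C" using cycle_card_pos[OF C] cycle_nonempty[OF C] by blast
  have card: "card D = card C" if "D \<in> lifts f n C" for D
    using card_lifts_eq_period[OF C K] per least that by blast
  then show "D \<in> lifts f n C \<Longrightarrow> card D = card C" .
  show "red n z \<in> C \<Longrightarrow> \<exists>D \<in> lifts f n C. red (Suc n) z \<in> D"
    using ex_lifts_mem[OF C K] per least by blast
  have "card (lifts f n C) * card C = 2 * card C"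
    using card_lifts_mult_period[OF C K] per least by blast
  then show "splits f n C"
    unfolding splits_def using card K cycle_nonempty[OF C] by auto
  assume D: "D \<in> lifts f n C" and z: "red (Suc n) z \<in> D"
  note zC = lifts_red_mem[OF D z]
  obtain c where c: "bcoef f n C z = 2 * c" "poly (piter f (card D)) z - z = 2 ^ Suc n * c"
    using half[OF zC] card[OF D] by auto
  then show "acoef f (Suc n) D z = acoef f n C z \<and> 2 * bcoef f (Suc n) D z = bcoef f n C z"
    using card[OF D] bcoef_eqI[OF c(2)] unfolding acoef_def by simp
qed

text \<open>For a strongly growing cycle, \<open>b(f\<^sup>k z) + b(z)\<close> is a sum of two odd numbers, so \<open>f\<^sup>2\<^sup>k\<close> fixes
  each point modulo \<open>2\<^sup>n\<^sup>+\<^sup>1\<close> while \<open>f\<^sup>k\<close> does not.\<close>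
lemma
  assumes C: "is_cycle f n C" and sg: "strongly_grows f n C"
  shows grows_if_strongly_grows: "grows f n C"
    and card_lifts_if_strongly_grows: "D \<in> lifts f n C \<Longrightarrow> card D = 2 * card C"
proof -
  define k where "k = card C"
  have k: "0 < k" using cycle_card_pos[OF C] cycle_nonempty[OF C] k_def by blast
  have odd: "\<not> 2 dvd bcoef f n C z" if "red n z \<in> C" for z
    using sg that unfolding strongly_grows_def by blast
  have fk: "poly (piter f k) z = z + 2 ^ n * bcoef f n C z" if "red n z \<in> C" for z
    using cycle_displacement[OF C that] k_def by (simp add: algebra_simps)
  have f2k: "poly (piter f (2 * k)) z = poly (piter f k) (poly (piter f k) z)" for z
    using poly_piter_add[of f k k z] by (simp add: mult_2)
  have per: "\<And>z. red n z \<in> C \<Longrightarrow> red (Suc n) (poly (piter f (2 * k)) z) = red (Suc n) z"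
  proof -
    fix z assume z: "red n z \<in> C"
    let ?w = "poly (piter f k) z"
    have w: "red n ?w \<in> C" using cycle_iterate_mem[OF C z] .
    have "poly (piter f (2 * k)) z - z = 2 ^ n * (bcoef f n C ?w + bcoef f n C z)"
      using f2k fk[OF z] fk[OF w] by (simp add: algebra_simps)
    moreover obtain c where "bcoef f n C ?w + bcoef f n C z = 2 * c"
      using even_add_odd_odd[OF odd[OF w] odd[OF z]] by blast
    ultimately have "poly (piter f (2 * k)) z - z = 2 ^ Suc n * c" by simp
    then show "red (Suc n) (poly (piter f (2 * k)) z) = red (Suc n) z" by (simp add: red_eq_iff_dvd)
  qed
  have least: "\<And>z i. red n z \<in> C \<Longrightarrow> 0 < i \<Longrightarrow> i < 2 * k \<Longrightarrow>
      red (Suc n) (poly (piter f i) z) \<noteq> red (Suc n) z"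
  proof
    fix z i assume z: "red n z \<in> C" and i: "0 < i" "i < 2 * k"
      and eq: "red (Suc n) (poly (piter f i) z) = red (Suc n) z"
    then have "red n (poly (piter f i) z) = red n z" using red_Suc_mod by metis
    then have "k dvd i" using cycle_period_dvd[OF C z] k_def by simp
    then have "i = k" using i by (auto elim!: dvdE)
    then have "(2::z2) ^ (1 + n) dvd 2 ^ n * bcoef f n C z"
      using eq fk[OF z] by (simp add: red_eq_iff_dvd)
    then show False using odd[OF z] two_power_dvd_two_power_mult_iff[of 1 n] by simp
  qed
  have K: "0 < 2 * k" using k by simp
  show card: "card D = 2 * card C" if "D \<in> lifts f n C" for D
    using card_lifts_eq_period[OF C K] per least that k_def by blast
  have "card (lifts f n C) = 1"
    using card_lifts_mult_period[OF C K] per least k k_def by simp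
  then show "grows f n C"
    unfolding grows_def using card by (metis card_1_singletonE singletonI)
qed

lemma strongly_grows_lifts:
  assumes C: "is_cycle f n C" and n: "2 \<le> n" and sg: "strongly_grows f n C"
    and D: "D \<in> lifts f n C"
  shows "strongly_grows f (Suc n) D"
  unfolding strongly_grows_def
proof (intro allI impI conjI)
  define k where "k = card C"
  fix z assume zD: "red (Suc n) z \<in> D"
  have z: "red n z \<in> C" using lifts_red_mem[OF D zD] .
  let ?w = "poly (piter f k) z" and ?a = "deriv_at (piter f k)"
  have w: "red n ?w \<in> C" using cycle_iterate_mem[OF C z] .
  have a4: "(4::z2) dvd ?a y - 1" and odd: "\<not> 2 dvd bcoef f n C y" if "red n y \<in> C" for y
    using sg that unfolding strongly_grows_def acoef_def k_def by blast+
  have cardD: "card D = 2 * k" using card_lifts_if_strongly_grows[OF C sg D] k_def by simp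
  have "acoef f (Suc n) D z = ?a ?w * ?a z"
    unfolding acoef_def cardD
    by (rule deriv_at_chain) (simp add: poly_piter_add[symmetric] mult_2)
  then have "acoef f (Suc n) D z - 1 = (?a ?w - 1) * ?a z + (?a z - 1)"
    by (simp add: algebra_simps)
  then show "(4::z2) dvd acoef f (Suc n) D z - 1"
    by (simp only:) (intro dvd_add dvd_mult2 a4[OF w] a4[OF z])
  define b where "b = bcoef f n C z"
  obtain Q where Q: "bcoef f n C (z + 2 ^ n * b) = b + b * (acoef f n C z - 1) + 2 ^ n * b ^ 2 * Q"
    using bcoef_shift[OF C z, of b] b_def by blast
  obtain u where u: "acoef f n C z - 1 = 4 * u" using a4[OF z] unfolding acoef_def k_def by blast
  obtain m where m: "n = Suc (Suc m)" using n by (metis add_2_eq_Suc le_iff_add)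
  have w_eq: "?w = z + 2 ^ n * b" using cycle_displacement[OF C z] b_def k_def by (simp add: algebra_simps)
  have "poly (piter f (card D)) z = poly (piter f k) ?w"
    using cardD poly_piter_add[of f k k z] by (simp add: mult_2)
  then have "poly (piter f (card D)) z - z = 2 ^ n * (bcoef f n C ?w + b)"
    using cycle_displacement[OF C z] cycle_displacement[OF C w]
    unfolding b_def k_def by (simp add: algebra_simps)
  also have "\<dots> = 2 ^ Suc n * (b + 2 * (u * b + 2 ^ m * b ^ 2 * Q))"
    unfolding w_eq Q u by (simp add: m algebra_simps)
  finally have "bcoef f (Suc n) D z = b + 2 * (u * b + 2 ^ m * b ^ 2 * Q)" by (rule bcoef_eqI)
  then show "\<not> 2 dvd bcoef f (Suc n) D z"
    using odd[OF z] b_def by (simp add: dvd_add_left_iff)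
qed

section \<open>Cycles lying above a given cycle\<close>

lemma cycle_image_mod:
  assumes D: "is_cycle f m D" and l: "l \<le> m"
  shows "is_cycle f l ((\<lambda>y. y mod 2 ^ l) ` D)"
proof -
  obtain z where z: "red m z \<in> D" using cycle_nonempty[OF D] by blast
  have iterates: "{red q (poly (piter f i) z) | i. i < N} = (\<lambda>i. red q (poly (piter f i) z)) ` {..<N}"
    for q N by auto
  have "(\<lambda>y. y mod 2 ^ l) ` D = (\<lambda>y. y mod 2 ^ l) ` (\<lambda>i. red m (poly (piter f i) z)) ` {..<card D}"
    using cycle_eq_iterates[OF D z] iterates by metis
  then have image: "(\<lambda>y. y mod 2 ^ l) ` D = {red l (poly (piter f i) z) | i. i < card D}"
    by (simp add: image_image red_mod[OF l] iterates)
  have "red l (poly (piter f (card D)) z) = red l z"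
    using cycle_period[OF D z] red_mod[OF l] by metis
  then show ?thesis unfolding image by (rule cycle_of_period[OF cycle_card_pos[OF D z]])
qed

lemma above_same_level:
  assumes C: "is_cycle f n C" and ab: "above f n C n D"
  shows "D = C"
proof -
  have D: "is_cycle f n D" using ab unfolding above_def by simp
  obtain z where z: "red n z \<in> D" using cycle_nonempty[OF D] by blast
  show ?thesis using cycle_eq[OF D C z above_red_mem[OF ab z]] .
qed

lemma above_Suc_iff_lifts: "above f n C (Suc n) D \<longleftrightarrow> D \<in> lifts f n C"
  unfolding lifts_def by simp

lemma above_split:
  assumes ab: "above f n C m D" and l: "n \<le> l" "l \<le> m"
  shows "above f n C l ((\<lambda>y. y mod 2 ^ l) ` D)" and "above f l ((\<lambda>y. y mod 2 ^ l) ` D) m D"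
proof -
  have D: "is_cycle f m D" and sub: "(\<lambda>y. y mod 2 ^ n) ` D \<subseteq> C"
    using ab unfolding above_def by auto
  have "y mod 2 ^ l mod 2 ^ n = y mod 2 ^ n" for y :: int
    using l(1) by (simp add: mod_mod_cancel le_imp_power_dvd)
  then have "(\<lambda>y. y mod 2 ^ n) ` (\<lambda>y. y mod 2 ^ l) ` D \<subseteq> C" using sub by auto
  then show "above f n C l ((\<lambda>y. y mod 2 ^ l) ` D)" "above f l ((\<lambda>y. y mod 2 ^ l) ` D) m D"
    using cycle_image_mod[OF D l(2)] D l unfolding above_def by auto
qed

lemma above_even_bcoef_tower:
  assumes C: "is_cycle f n C" and even: "\<And>z. red n z \<in> C \<Longrightarrow> (2::z2) ^ \<beta> dvd bcoef f n C z"
  shows "j \<le> \<beta> \<Longrightarrow> above f n C (n + j) D \<Longrightarrow> card D = card C \<and>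
     (\<forall>z. red (n + j) z \<in> D \<longrightarrow> acoef f (n + j) D z = acoef f n C z \<and>
        2 ^ j * bcoef f (n + j) D z = bcoef f n C z)"
proof (induction j arbitrary: D)
  case 0
  then have "D = C" using above_same_level[OF C] by simp
  then show ?case by simp
next
  case (Suc j)
  define E where "E = (\<lambda>y. y mod 2 ^ (n + j)) ` D"
  have CE: "above f n C (n + j) E" and ED: "D \<in> lifts f (n + j) E"
    using above_split[of f n C "n + Suc j" D "n + j"] Suc.prems
    unfolding E_def above_Suc_iff_lifts[symmetric] by simp_all
  have IH: "card E = card C \<and> (\<forall>z. red (n + j) z \<in> E \<longrightarrow> acoef f (n + j) E z = acoef f n C z \<and>
        2 ^ j * bcoef f (n + j) E z = bcoef f n C z)"
    using Suc CE by simp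
  have E: "is_cycle f (n + j) E" using CE unfolding above_def by simp
  have evenE: "2 dvd bcoef f (n + j) E z" if z: "red (n + j) z \<in> E" for z
  proof -
    have "(2::z2) ^ (1 + j) dvd bcoef f n C z"
      by (rule power_le_dvd[OF even[OF above_red_mem[OF CE z]]]) (use Suc.prems(1) in simp)
    then have "(2::z2) ^ (1 + j) dvd 2 ^ j * bcoef f (n + j) E z" using IH z by simp
    then show ?thesis using two_power_dvd_two_power_mult_iff[of 1 j] by simp
  qed
  have "card D = card C" using card_lifts_if_even_bcoef[OF E] evenE ED IH by metis
  moreover have "acoef f (n + Suc j) D z = acoef f n C z \<and>
      2 ^ Suc j * bcoef f (n + Suc j) D z = bcoef f n C z" if z: "red (n + Suc j) z \<in> D" for z
  proof -
    have zE: "red (n + j) z \<in> E" using lifts_red_mem[OF ED] z by simp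
    have "acoef f (Suc (n + j)) D z = acoef f (n + j) E z \<and>
        2 * bcoef f (Suc (n + j)) D z = bcoef f (n + j) E z"
      by (rule lifts_coeffs_if_even_bcoef[OF E]) (use evenE ED z in simp_all)
    moreover have "2 ^ Suc j * bcoef f (Suc (n + j)) D z = 2 ^ j * (2 * bcoef f (Suc (n + j)) D z)"
      by simp
    ultimately show ?thesis using IH zE by simp
  qed
  ultimately show ?case by blast
qed

lemma above_strongly_grows:
  assumes C: "is_cycle f l C" and l: "2 \<le> l" and sg: "strongly_grows f l C"
    and ab: "above f l C m D"
  shows "strongly_grows f m D \<and> grows f m D"
proof -
  have "above f l C (l + j) D \<Longrightarrow> strongly_grows f (l + j) D \<and> grows f (l + j) D" for j D
  proof (induction j arbitrary: D)
    case 0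
    then have "D = C" using above_same_level[OF C] by simp
    then show ?case using sg grows_if_strongly_grows[OF C sg] by simp
  next
    case (Suc j)
    define E where "E = (\<lambda>y. y mod 2 ^ (l + j)) ` D"
    have CE: "above f l C (l + j) E" and ED: "D \<in> lifts f (l + j) E"
      using above_split[of f l C "l + Suc j" D "l + j"] Suc.prems
      unfolding E_def above_Suc_iff_lifts[symmetric] by simp_all
    have E: "is_cycle f (l + j) E" using CE unfolding above_def by simp
    have "strongly_grows f (Suc (l + j)) D"
      using strongly_grows_lifts[OF E _ _ ED] Suc.IH[OF CE] l by simp
    then show ?case using grows_if_strongly_grows[OF lifts_cycle[OF ED]] by simp
  qed
  moreover have "m = l + (m - l)" using ab unfolding above_def by simp
  ultimately show ?thesis using ab by metis
qed

lemma strongly_splits_D: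
  assumes "strongly_splits f n C" "red n z \<in> C"
  shows "(4::z2) dvd acoef f n C z - 1" and "2 dvd bcoef f n C z" and "\<not> 2 dvd acoef f n C z"
  using assms odd_if_four_dvd_pred unfolding strongly_splits_def by blast+

lemma strongly_splits_imp_splits: "is_cycle f n C \<Longrightarrow> strongly_splits f n C \<Longrightarrow> splits f n C"
  using splits_if_even_bcoef strongly_splits_D(2) by blast

lemma
  assumes C: "is_cycle f n C" and n: "1 \<le> n"
    and a4: "\<And>z. red n z \<in> C \<Longrightarrow> (4::z2) dvd acoef f n C z - 1" and x: "red n x \<in> C"
  shows strongly_splitsI: "2 dvd bcoef f n C x \<Longrightarrow> strongly_splits f n C"
    and strongly_growsI: "\<not> 2 dvd bcoef f n C x \<Longrightarrow> strongly_grows f n C"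
proof -
  have odd: "\<And>z. red n z \<in> C \<Longrightarrow> \<not> 2 dvd acoef f n C z" using a4 odd_if_four_dvd_pred by blast
  have "(2::z2) ^ 1 dvd acoef f n C x - 1" using two_dvd_if_four_dvd[OF a4[OF x]] by simp
  then have "(2::z2) dvd bcoef f n C x \<longleftrightarrow> 2 dvd bcoef f n C z" if "red n z \<in> C" for z
    using bcoef_dvd_iff[of f n C x z 1] C odd x that n by simp
  then show "2 dvd bcoef f n C x \<Longrightarrow> strongly_splits f n C"
    and "\<not> 2 dvd bcoef f n C x \<Longrightarrow> strongly_grows f n C"
    unfolding strongly_splits_def strongly_grows_def using a4 by blast+
qed

lemma above_strongly_splits:
  assumes C: "is_cycle f n C" and ss: "strongly_splits f n C" and x: "red n x \<in> C"
    and \<beta>: "\<beta> \<le> n" and B: "(2::z2) ^ \<beta> dvd bcoef f n C x" and A: "(2::z2) ^ \<beta> dvd acoef f n C x - 1"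
    and ab: "above f n C m D" and m: "m < n + \<beta>"
  shows "strongly_splits f m D"
proof -
  have even: "(2::z2) ^ \<beta> dvd bcoef f n C z" if "red n z \<in> C" for z
    using bcoef_dvd_iff[of f n C x z \<beta>] C strongly_splits_D(3)[OF ss] x that \<beta> A B by blast
  obtain j where j: "m = n + j" "Suc j \<le> \<beta>"
    using ab m unfolding above_def by (intro that[of "m - n"]) auto
  have D: "is_cycle f m D" using ab unfolding above_def by simp
  obtain z where z: "red m z \<in> D" using cycle_nonempty[OF D] by blast
  have tower: "acoef f m D y = acoef f n C y \<and> 2 ^ j * bcoef f m D y = bcoef f n C y"
    if "red m y \<in> D" for y
    using above_even_bcoef_tower[OF C even, of j D] j ab that by simp
  have "(2::z2) ^ (1 + j) dvd 2 ^ j * bcoef f m D z"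
    using tower[OF z] power_le_dvd[OF even[OF above_red_mem[OF ab z]], of "1 + j"] j(2) by simp
  then have "2 dvd bcoef f m D z" using two_power_dvd_two_power_mult_iff[of 1 j] by simp
  moreover have "(4::z2) dvd acoef f m D y - 1" if "red m y \<in> D" for y
    using tower[OF that] strongly_splits_D(1)[OF ss above_red_mem[OF ab that]] by simp
  ultimately show ?thesis using strongly_splitsI[OF D _ _ z] j \<beta> by simp
qed

lemma above_strongly_grows_if_bcoef_valuation:
  assumes C: "is_cycle f n C" and ss: "strongly_splits f n C" and x: "red n x \<in> C"
    and n: "2 \<le> n" and \<beta>: "\<beta> < n" and B1: "(2::z2) ^ \<beta> dvd bcoef f n C x"
    and B2: "\<not> (2::z2) ^ Suc \<beta> dvd bcoef f n C x" and A: "(2::z2) ^ Suc \<beta> dvd acoef f n C x - 1"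
    and ab: "above f n C m D" and m: "n + \<beta> \<le> m"
  shows "strongly_grows f m D \<and> grows f m D"
proof -
  note odd = strongly_splits_D(3)[OF ss]
  have even: "(2::z2) ^ \<beta> dvd bcoef f n C z" if "red n z \<in> C" for z
    using bcoef_dvd_iff[of f n C x z \<beta>] C odd x that \<beta> B1 A power_le_dvd[OF A, of \<beta>] by simp
  have not_even: "\<not> (2::z2) ^ Suc \<beta> dvd bcoef f n C z" if "red n z \<in> C" for z
    using bcoef_dvd_iff[of f n C x z "Suc \<beta>"] C odd x that \<beta> B2 A by simp
  define E where "E = (\<lambda>y. y mod 2 ^ (n + \<beta>)) ` D"
  have CE: "above f n C (n + \<beta>) E" and ED: "above f (n + \<beta>) E m D"
    using above_split[OF ab _ m] unfolding E_def by simp_all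
  have E: "is_cycle f (n + \<beta>) E" using CE unfolding above_def by simp
  have tower: "acoef f (n + \<beta>) E y = acoef f n C y \<and> 2 ^ \<beta> * bcoef f (n + \<beta>) E y = bcoef f n C y"
    if "red (n + \<beta>) y \<in> E" for y
    using above_even_bcoef_tower[OF C even, of \<beta> E] CE that by simp
  obtain z where z: "red (n + \<beta>) z \<in> E" using cycle_nonempty[OF E] by blast
  have "\<not> 2 dvd bcoef f (n + \<beta>) E z"
    using tower[OF z] not_even[OF above_red_mem[OF CE z]]
      two_power_dvd_two_power_mult_iff[of 1 \<beta> "bcoef f (n + \<beta>) E z"] by auto
  moreover have "(4::z2) dvd acoef f (n + \<beta>) E y - 1" if "red (n + \<beta>) y \<in> E" for y
    using tower[OF that] strongly_splits_D(1)[OF ss above_red_mem[OF CE that]] by simp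
  ultimately have "strongly_grows f (n + \<beta>) E" using strongly_growsI[OF E _ _ z] n by simp
  then show ?thesis using above_strongly_grows[OF E _ _ ED] n by simp
qed

lemma ex_reps_bcoef_parity:
  assumes C: "is_cycle f n C" and x: "red n x \<in> C" and \<alpha>: "\<alpha> < n"
    and A1: "(2::z2) ^ \<alpha> dvd acoef f n C x - 1" and A2: "\<not> (2::z2) ^ Suc \<alpha> dvd acoef f n C x - 1"
    and B: "(2::z2) ^ \<alpha> dvd bcoef f n C x"
  obtains x1 x2 where "red n x1 \<in> C" "red n x2 \<in> C"
    "(2::z2) ^ Suc \<alpha> dvd bcoef f n C x1" "\<not> (2::z2) ^ Suc \<alpha> dvd bcoef f n C x2"
proof -
  define x' where "x' = x + 2 ^ n * 1"
  have "red n x' = red n x" unfolding x'_def red_eq_iff_dvd by simp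
  then have x': "red n x' \<in> C" using x by simp
  obtain Q where Q: "bcoef f n C x' = bcoef f n C x + (acoef f n C x - 1) + 2 ^ n * Q"
    using bcoef_shift[OF C x, of 1] unfolding x'_def by auto
  obtain c where c: "bcoef f n C x = 2 ^ \<alpha> * c" using B by blast
  obtain d where d: "acoef f n C x - 1 = 2 ^ \<alpha> * d" using A1 by blast
  have odd_d: "\<not> 2 dvd d" using A2 d two_power_dvd_two_power_mult_iff[of 1 \<alpha> d] by auto
  have "(2::z2) ^ (1 + \<alpha>) dvd 2 ^ n * Q" using \<alpha> by (intro dvd_mult2 le_imp_power_dvd) simp
  moreover have "bcoef f n C x' = 2 ^ \<alpha> * (c + d) + 2 ^ n * Q" using Q c d by (simp add: distrib_left)
  ultimately have "(2::z2) ^ (1 + \<alpha>) dvd bcoef f n C x' \<longleftrightarrow> 2 ^ (1 + \<alpha>) dvd 2 ^ \<alpha> * (c + d)"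
    by (simp only: dvd_add_left_iff)
  then have "2 ^ Suc \<alpha> dvd bcoef f n C x' \<longleftrightarrow> 2 dvd c + d"
    using two_power_dvd_two_power_mult_iff[of 1 \<alpha>] by simp
  moreover have "2 ^ Suc \<alpha> dvd bcoef f n C x \<longleftrightarrow> 2 dvd c"
    using c two_power_dvd_two_power_mult_iff[of 1 \<alpha> c] by simp
  moreover have "2 dvd c + d \<longleftrightarrow> \<not> 2 dvd c"
    using odd_d even_add_odd_odd[OF _ odd_d] by (metis dvd_add_right_iff)
  ultimately show ?thesis using that x x' by metis
qed

lemma lifts_acoef_valuation:
  assumes C: "is_cycle f n C" and ss: "strongly_splits f n C" and x: "red n x \<in> C"
    and \<alpha>: "\<alpha> < n" and A1: "(2::z2) ^ \<alpha> dvd acoef f n C x - 1"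
    and A2: "\<not> (2::z2) ^ Suc \<alpha> dvd acoef f n C x - 1"
    and D: "D \<in> lifts f n C" and y: "red (Suc n) y \<in> D"
  shows "(4::z2) dvd acoef f (Suc n) D y - 1" "(2::z2) ^ \<alpha> dvd acoef f (Suc n) D y - 1"
    "\<not> (2::z2) ^ Suc \<alpha> dvd acoef f (Suc n) D y - 1"
proof -
  note yC = lifts_red_mem[OF D y]
  have "acoef f (Suc n) D y = acoef f n C y"
    using lifts_coeffs_if_even_bcoef[OF C strongly_splits_D(2)[OF ss] D y] by blast
  moreover note strongly_splits_D(1)[OF ss yC]
    acoef_pred_dvd_iff[OF C strongly_splits_D(3)[OF ss] x yC, of \<alpha>]
    acoef_pred_dvd_iff[OF C strongly_splits_D(3)[OF ss] x yC, of "Suc \<alpha>"]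
  ultimately show "(4::z2) dvd acoef f (Suc n) D y - 1" "(2::z2) ^ \<alpha> dvd acoef f (Suc n) D y - 1"
    "\<not> (2::z2) ^ Suc \<alpha> dvd acoef f (Suc n) D y - 1"
    using A1 A2 \<alpha> by simp_all
qed

lemma lifts_if_small_acoef_valuation:
  assumes n: "2 \<le> n" and C: "is_cycle f n C" and ss: "strongly_splits f n C" and x: "red n x \<in> C"
    and \<alpha>: "\<alpha> < n" and A1: "(2::z2) ^ \<alpha> dvd acoef f n C x - 1"
    and A2: "\<not> (2::z2) ^ Suc \<alpha> dvd acoef f n C x - 1" and B: "(2::z2) ^ \<alpha> dvd bcoef f n C x"
  obtains D1 D2 where "D1 \<noteq> D2" "lifts f n C = {D1, D2}" "strongly_splits f (Suc n) D1"
    "\<And>y. red (Suc n) y \<in> D1 \<Longrightarrow> (2::z2) ^ \<alpha> dvd acoef f (Suc n) D1 y - 1 \<and>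
       \<not> (2::z2) ^ Suc \<alpha> dvd acoef f (Suc n) D1 y - 1 \<and> (2::z2) ^ \<alpha> dvd bcoef f (Suc n) D1 y"
    "\<And>m D. above f (Suc n) D2 m D \<Longrightarrow> m < n + \<alpha> \<Longrightarrow> strongly_splits f m D"
    "\<And>m D. above f (Suc n) D2 m D \<Longrightarrow> n + \<alpha> \<le> m \<Longrightarrow> strongly_grows f m D \<and> grows f m D"
proof -
  note even = strongly_splits_D(2)[OF ss] and odd = strongly_splits_D(3)[OF ss]
  note lift_a = lifts_acoef_valuation[OF C ss x \<alpha> A1 A2]
  have "\<not> \<alpha> < 2"
  proof
    assume "\<alpha> < 2"
    then have "(2::z2) ^ Suc \<alpha> dvd 2 ^ 2" by (intro le_imp_power_dvd) simp
    then have "(2::z2) ^ Suc \<alpha> dvd acoef f n C x - 1"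
      using strongly_splits_D(1)[OF ss x] by (simp add: dvd_trans)
    then show False using A2 by contradiction
  qed
  then obtain \<beta> where \<beta>: "\<alpha> = Suc \<beta>" "1 \<le> \<beta>" by (intro that[of "\<alpha> - 1"]) auto
  obtain x1 x2 where x12: "red n x1 \<in> C" "red n x2 \<in> C"
    "(2::z2) ^ Suc \<alpha> dvd bcoef f n C x1" "\<not> (2::z2) ^ Suc \<alpha> dvd bcoef f n C x2"
    using ex_reps_bcoef_parity[OF C x \<alpha> A1 A2 B] by blast
  obtain D1 D2 where D1: "D1 \<in> lifts f n C" "red (Suc n) x1 \<in> D1"
    and D2: "D2 \<in> lifts f n C" "red (Suc n) x2 \<in> D2"
    using ex_lifts_mem_if_even_bcoef[OF C even] x12(1,2) by metis
  have half: "2 * bcoef f (Suc n) D y = bcoef f n C y" if "D \<in> lifts f n C" "red (Suc n) y \<in> D" for D y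
    using lifts_coeffs_if_even_bcoef[OF C even that] by blast
  have b1: "(2::z2) ^ \<alpha> dvd bcoef f (Suc n) D1 x1"
    using half[OF D1, symmetric] x12(3) two_power_dvd_two_power_mult_iff[of \<alpha> 1] by simp
  have b2: "\<not> (2::z2) ^ Suc \<beta> dvd bcoef f (Suc n) D2 x2" "(2::z2) ^ \<beta> dvd bcoef f (Suc n) D2 x2"
    using half[OF D2, symmetric] x12(4) bcoef_dvd_iff[OF C odd x x12(2), of \<alpha>] \<alpha> A1 B \<beta>(1)
      two_power_dvd_two_power_mult_iff[of "Suc \<beta>" 1] two_power_dvd_two_power_mult_iff[of \<beta> 1]
    by simp_all
  have lift_odd: "\<And>y. red (Suc n) y \<in> D \<Longrightarrow> \<not> 2 dvd acoef f (Suc n) D y" if "D \<in> lifts f n C" for D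
    using lift_a(1)[OF that] odd_if_four_dvd_pred by blast
  have b1_all: "(2::z2) ^ \<alpha> dvd bcoef f (Suc n) D1 y" if "red (Suc n) y \<in> D1" for y
    using bcoef_dvd_iff[OF lifts_cycle[OF D1(1)] lift_odd[OF D1(1)] D1(2) that] lift_a(2)[OF D1] b1 \<alpha>
    by simp
  have ne: "D1 \<noteq> D2" using b1_all D2(2) b2(1) \<beta>(1) by blast
  have L: "lifts f n C = {D1, D2}"
  proof -
    have "card (lifts f n C) = 2" using splits_if_even_bcoef[OF C even] unfolding splits_def by blast
    moreover have "{D1, D2} \<subseteq> lifts f n C" using D1 D2 by simp
    moreover have "card {D1, D2} = 2" using ne by simp
    ultimately show ?thesis using card_subset_eq[OF finite_lifts] by metis
  qed
  have ss1: "strongly_splits f (Suc n) D1"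
    using strongly_splitsI[OF lifts_cycle[OF D1(1)] _ lift_a(1)[OF D1(1)] D1(2)] b1 \<beta> power_le_dvd[OF b1, of 1]
    by simp
  have ss2: "strongly_splits f (Suc n) D2"
    using strongly_splitsI[OF lifts_cycle[OF D2(1)] _ lift_a(1)[OF D2(1)] D2(2)] b2 \<beta> power_le_dvd[OF b2(2), of 1]
    by simp
  have a2: "(2::z2) ^ Suc \<beta> dvd acoef f (Suc n) D2 x2 - 1" using lift_a(2)[OF D2] \<beta>(1) by simp
  show ?thesis
  proof (rule that[OF ne L ss1])
    show "(2::z2) ^ \<alpha> dvd acoef f (Suc n) D1 y - 1 \<and> \<not> (2::z2) ^ Suc \<alpha> dvd acoef f (Suc n) D1 y - 1 \<and>
        (2::z2) ^ \<alpha> dvd bcoef f (Suc n) D1 y" if "red (Suc n) y \<in> D1" for y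
      using lift_a(2,3)[OF D1(1) that] b1_all[OF that] by blast
    show "strongly_splits f m D" if "above f (Suc n) D2 m D" "m < n + \<alpha>" for m D
      using above_strongly_splits[OF lifts_cycle[OF D2(1)] ss2 D2(2) _ b2(2) power_le_dvd[OF a2] that(1)]
        that(2) \<beta> \<alpha> by simp
    show "strongly_grows f m D \<and> grows f m D" if "above f (Suc n) D2 m D" "n + \<alpha> \<le> m" for m D
      using above_strongly_grows_if_bcoef_valuation[OF lifts_cycle[OF D2(1)] ss2 D2(2) _ _ b2(2) b2(1) a2 that(1)]
        that(2) \<beta> \<alpha> n by simp
  qed
qed

section \<open>The three cases in terms of valuations\<close>

lemma cycles_above_if_B_lt_A:
  assumes n: "2 \<le> n" and \<sigma>: "is_cycle f n \<sigma>" and ss: "strongly_splits f n \<sigma>" and x: "red n x \<in> \<sigma>"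
    and BA: "min (Aval f n \<sigma> x) (enat n) > Bval f n \<sigma> x"
  shows "(\<forall>m D. n + 1 \<le> m \<and> enat m \<le> enat n + Bval f n \<sigma> x - 1 \<and> above f n \<sigma> m D
            \<longrightarrow> strongly_splits f m D)
    \<and> (\<forall>m D. enat m = enat n + Bval f n \<sigma> x \<and> above f n \<sigma> m D \<longrightarrow> strongly_grows f m D)"
proof -
  obtain \<beta> where \<beta>: "Bval f n \<sigma> x = enat \<beta>" "\<beta> < n" using BA by (cases "Bval f n \<sigma> x") auto
  have B: "(2::z2) ^ \<beta> dvd bcoef f n \<sigma> x" "\<not> (2::z2) ^ Suc \<beta> dvd bcoef f n \<sigma> x"
    using \<beta>(1) unfolding Bval_def v2_eq_iff by auto
  have A: "(2::z2) ^ Suc \<beta> dvd acoef f n \<sigma> x - 1"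
    using BA \<beta>(1) unfolding Aval_def v2_ge_iff[symmetric] by (simp add: Suc_ile_eq)
  show ?thesis
    using above_strongly_splits[OF \<sigma> ss x _ B(1) power_le_dvd[OF A]]
      above_strongly_grows_if_bcoef_valuation[OF \<sigma> ss x n \<beta>(2) B A] \<beta>
    by (auto simp: one_enat_def)
qed

lemma lifts_if_A_le_B:
  assumes n: "2 \<le> n" and \<sigma>: "is_cycle f n \<sigma>" and ss: "strongly_splits f n \<sigma>" and x: "red n x \<in> \<sigma>"
    and AB: "Aval f n \<sigma> x \<le> Bval f n \<sigma> x" and An: "Aval f n \<sigma> x < enat n"
  shows "\<exists>D1 D2. D1 \<noteq> D2 \<and> lifts f n \<sigma> = {D1, D2} \<and>
          strongly_splits f (n + 1) D1 \<and>
          (\<forall>y. red (n + 1) y \<in> D1 \<longrightarrow>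
              Aval f (n + 1) D1 y \<le> Bval f (n + 1) D1 y \<and> Aval f (n + 1) D1 y < enat (n + 1)) \<and>
          (\<forall>m D. enat m \<le> enat n + Aval f n \<sigma> x - 1 \<and> above f (n + 1) D2 m D \<longrightarrow> splits f m D) \<and>
          (\<forall>m D. enat m \<ge> enat n + Aval f n \<sigma> x \<and> above f (n + 1) D2 m D \<longrightarrow>
              strongly_grows f m D \<and> grows f m D)"
proof -
  obtain \<alpha> where \<alpha>: "Aval f n \<sigma> x = enat \<alpha>" "\<alpha> < n" using An by (cases "Aval f n \<sigma> x") auto
  have A: "(2::z2) ^ \<alpha> dvd acoef f n \<sigma> x - 1" "\<not> (2::z2) ^ Suc \<alpha> dvd acoef f n \<sigma> x - 1"
    using \<alpha>(1) unfolding Aval_def v2_eq_iff by auto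
  have B: "(2::z2) ^ \<alpha> dvd bcoef f n \<sigma> x" using AB \<alpha>(1) unfolding Bval_def v2_ge_iff[symmetric] by simp
  obtain D1 D2 where D: "D1 \<noteq> D2" "lifts f n \<sigma> = {D1, D2}" "strongly_splits f (Suc n) D1"
    "\<And>y. red (Suc n) y \<in> D1 \<Longrightarrow> (2::z2) ^ \<alpha> dvd acoef f (Suc n) D1 y - 1 \<and>
       \<not> (2::z2) ^ Suc \<alpha> dvd acoef f (Suc n) D1 y - 1 \<and> (2::z2) ^ \<alpha> dvd bcoef f (Suc n) D1 y"
    "\<And>m D. above f (Suc n) D2 m D \<Longrightarrow> m < n + \<alpha> \<Longrightarrow> strongly_splits f m D"
    "\<And>m D. above f (Suc n) D2 m D \<Longrightarrow> n + \<alpha> \<le> m \<Longrightarrow> strongly_grows f m D \<and> grows f m D"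
    using lifts_if_small_acoef_valuation[OF n \<sigma> ss x \<alpha>(2) A B] by blast
  have D1_vals: "Aval f (n + 1) D1 y = enat \<alpha> \<and> enat \<alpha> \<le> Bval f (n + 1) D1 y" if "red (n + 1) y \<in> D1" for y
    using D(4)[of y] that unfolding Aval_def Bval_def v2_eq_iff v2_ge_iff by simp
  have D2_splits: "splits f m D" if "above f (n + 1) D2 m D" "m \<le> n + \<alpha> - 1" for m D
  proof -
    have "Suc n \<le> m" using that(1) unfolding above_def by simp
    then have "m < n + \<alpha>" using that(2) by linarith
    then show ?thesis using strongly_splits_imp_splits D(5)[of m D] that unfolding above_def by simp
  qed
  show ?thesis
    using D(1-3,6) D1_vals D2_splits \<alpha>
    by (intro exI[of _ D1] exI[of _ D2]) (auto simp: one_enat_def)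
qed

lemma cycles_above_if_A_B_ge_n:
  assumes \<sigma>: "is_cycle f n \<sigma>" and ss: "strongly_splits f n \<sigma>" and x: "red n x \<in> \<sigma>"
    and B: "Bval f n \<sigma> x \<ge> enat n" and A: "Aval f n \<sigma> x \<ge> enat n"
  shows "\<forall>m D. n + 1 \<le> m \<and> m \<le> 2 * n - 1 \<and> above f n \<sigma> m D \<longrightarrow> strongly_splits f m D"
  using above_strongly_splits[OF \<sigma> ss x order.refl] A B unfolding Aval_def Bval_def v2_ge_iff
  by auto

theorem proposition3p2:
  fixes f :: "z2 poly" and n :: nat and \<sigma> :: "int set" and x :: z2
  assumes "n \<ge> 2"
    and "is_cycle f n \<sigma>"
    and "strongly_splits f n \<sigma>"
    and "red n x \<in> \<sigma>"
  shows
    "(min (Aval f n \<sigma> x) (enat n) > Bval f n \<sigma> x \<longrightarrow>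
       (\<forall>m D. n + 1 \<le> m \<and> enat m \<le> enat n + Bval f n \<sigma> x - 1 \<and> above f n \<sigma> m D
              \<longrightarrow> strongly_splits f m D) \<and>
       (\<forall>m D. enat m = enat n + Bval f n \<sigma> x \<and> above f n \<sigma> m D \<longrightarrow> strongly_grows f m D))
   \<and> (Aval f n \<sigma> x \<le> Bval f n \<sigma> x \<and> Aval f n \<sigma> x < enat n \<longrightarrow>
       (\<exists>D1 D2. D1 \<noteq> D2 \<and> lifts f n \<sigma> = {D1, D2} \<and>
          strongly_splits f (n + 1) D1 \<and>
          (\<forall>y. red (n + 1) y \<in> D1 \<longrightarrow>
              Aval f (n + 1) D1 y \<le> Bval f (n + 1) D1 y \<and> Aval f (n + 1) D1 y < enat (n + 1)) \<and>
          (\<forall>m D. enat m \<le> enat n + Aval f n \<sigma> x - 1 \<and> above f (n + 1) D2 m D \<longrightarrow> splits f m D) \<and>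
          (\<forall>m D. enat m \<ge> enat n + Aval f n \<sigma> x \<and> above f (n + 1) D2 m D \<longrightarrow>
              strongly_grows f m D \<and> grows f m D)))
   \<and> (Bval f n \<sigma> x \<ge> enat n \<and> Aval f n \<sigma> x \<ge> enat n \<longrightarrow>
       (\<forall>m D. n + 1 \<le> m \<and> m \<le> 2 * n - 1 \<and> above f n \<sigma> m D \<longrightarrow> strongly_splits f m D))"
  using cycles_above_if_B_lt_A[OF assms] lifts_if_A_le_B[OF assms] cycles_above_if_A_B_ge_n[OF assms(2-4)]
  by blast

end
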